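(* There is an isomorphism of categories $\widehat{\mathfrak{Sur}}_n\cong{}_{\mathbb Z}\mathfrak{Laby}_n$, which is the identity on objects and sends a correspondence $[Y\xleftarrow{\phi_\ast}U\xrightarrow{\phi^\ast}X]$ to the pure maze $X\to Y$ having, for each $x\in X$ and $y\in Y$, exactly $|(\phi^\ast,\phi_\ast)^{-1}(x,y)|$ passages from $x$ to $y$.
   Context: $\mathfrak{Sur}$ is the category of finite sets and surjections. $\widehat{\mathfrak{Sur}}$: objects finite sets (and their formal direct sums); $\widehat{\mathfrak{Sur}}(X,Y)$ is the free abelian group on isomorphism classes (over $X$ and $Y$) of correspondences $Y\xleftarrow{}U\xrightarrow{}X$ with both maps surjective; composition of $Z\leftarrow V\to Y$ with $Y\leftarrow U\to X$ is the sum over weak pull-backs, i.e. over all subsets $W\subseteq V\times_YU$ such that both projections $W\to V$ and $W\to U$ are surjective, of $Z\leftarrow W\to X$. $\widehat{\mathfrak{Sur}}_n$ is the quotient category in which every correspondence $Y\leftarrow U\to X$ with $|U|>n$ is set to $0$. Over the base ring $\mathbb Z$: a passage $p\colon x\to y$ carries a label $\overline p\in\mathbb Z$; a maze $P\colon X\to Y$ between finite sets is a finite multi-set of passages with every element of $X$ a source and every element of $Y$ a target; pure means all labels equal $1$. ${}_{\mathbb Z}\mathfrak{Laby}$: objects formal finite direct sums of finite sets; morphisms generated by mazes modulo $P\cup\{x\xrightarrow0y\}=0$ and $P\cup\{x\xrightarrow{a+b}y\}=P\cup\{x\xrightarrow ay\}+P\cup\{x\xrightarrow by\}+P\cup\{x\xrightarrow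 ay,x\xrightarrow by\}$; composition $P\circ Q=\sum_{U\sqsubseteq P\boxtimes Q}U$ ($U$ a sub-multi-set of composable pairs using every passage occurrence of $P$ and $Q$, read as the maze with passages $x\xrightarrow{\overline p\overline q}z$). ${}_{\mathbb Z}\mathfrak{Laby}_n$: quotient by $P=0$ if $|P|>n$ and $P=\sum_d\prod_p\binom{\overline p}{d_p}I_d$ ($d_p\ge1$ on passage occurrences; $I_d$ has $d_p$ label-$1$ passages from source to target of $p$). *)

theory Defs
  imports Main "HOL-Library.Poly_Mapping" "HOL-Library.Product_Lexorder"
begin

text \<open>The quotient of the free category by a set of relations R is the quotient by
  the smallest subgroup containing R and closed under composition on either
  side with arbitrary generators (i.e. the categorical ideal generated by R).\<close>

inductive_set gen_ideal ::
  "(('g \<Rightarrow>\<^sub>0 int) \<Rightarrow> ('g \<Rightarrow>\<^sub>0 int) \<Rightarrow> ('g \<Rightarrow>\<^sub>0 int)) \<Rightarrow> ('g \<Rightarrow>\<^sub>0 int) set \<Rightarrow> ('g \<Rightarrow>\<^sub>0 int) set"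
  for comp R where
  gen_base: "r \<in> R \<Longrightarrow> r \<in> gen_ideal comp R"
| gen_zero: "0 \<in> gen_ideal comp R"
| gen_diff: "a \<in> gen_ideal comp R \<Longrightarrow> b \<in> gen_ideal comp R \<Longrightarrow> a - b \<in> gen_ideal comp R"
| gen_left: "a \<in> gen_ideal comp R \<Longrightarrow> comp (frag_of g) a \<in> gen_ideal comp R"
| gen_right: "a \<in> gen_ideal comp R \<Longrightarrow> comp a (frag_of g) \<in> gen_ideal comp R"

text \<open>Bilinear extension of a composition defined on generators.
  bilin c a b = a o b (b is applied first).\<close>
definition bilin :: "('g \<Rightarrow> 'g \<Rightarrow> ('g \<Rightarrow>\<^sub>0 int)) \<Rightarrow> ('g \<Rightarrow>\<^sub>0 int) \<Rightarrow> ('g \<Rightarrow>\<^sub>0 int) \<Rightarrow> ('g \<Rightarrow>\<^sub>0 int)" where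
  "bilin c a b = frag_extend (\<lambda>p. frag_extend (\<lambda>q. c p q) b) a"

definition enum_set :: "'a set \<Rightarrow> 'a list" where
  "enum_set X = (SOME xs. distinct xs \<and> set xs = X)"

text \<open>A correspondence Y <-phi_* U -phi^*-> X is encoded as a list c of pairs:
  U = {..<length c}, phi^* i = fst (c!i) (in X), phi_* i = snd (c!i) (in Y).
  X and Y are the images, so both maps are surjective by construction.\<close>
type_synonym 'a corr = "('a \<times> 'a) list"

definition corr_src :: "'a corr \<Rightarrow> 'a set" where "corr_src c = fst ` set c"
definition corr_tgt :: "'a corr \<Rightarrow> 'a set" where "corr_tgt c = snd ` set c"

definition corr_iso :: "'a corr \<Rightarrow> 'a corr \<Rightarrow> bool" where
  "corr_iso c c' \<longleftrightarrow> length c = length c' \<and>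
     (\<exists>\<pi>. bij_betw \<pi> {..<length c} {..<length c'} \<and> (\<forall>i<length c. c' ! (\<pi> i) = c ! i))"

text \<open>Weak pull-backs: W subset of V x_Y U with both projections surjective.
  Here v : Y -> Z (Z <- V -> Y) and u : X -> Y (Y <- U -> X).\<close>
definition weak_pullbacks :: "'a corr \<Rightarrow> 'a corr \<Rightarrow> (nat \<times> nat) set set" where
  "weak_pullbacks v u = {W. W \<subseteq> {(i,j). i < length v \<and> j < length u \<and> fst (v!i) = snd (u!j)}
       \<and> fst ` W = {..<length v} \<and> snd ` W = {..<length u}}"

definition sur_comp_gen :: "'a corr \<Rightarrow> 'a corr \<Rightarrow> ('a corr \<Rightarrow>\<^sub>0 int)" where
  "sur_comp_gen v u = (\<Sum>W\<in>weak_pullbacks v u.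
      frag_of (map (\<lambda>(i,j). (fst (u!j), snd (v!i))) (sorted_list_of_set W)))"

definition sur_comp :: "('a corr \<Rightarrow>\<^sub>0 int) \<Rightarrow> ('a corr \<Rightarrow>\<^sub>0 int) \<Rightarrow> ('a corr \<Rightarrow>\<^sub>0 int)" where
  "sur_comp = bilin sur_comp_gen"

definition sur_id :: "'a set \<Rightarrow> ('a corr \<Rightarrow>\<^sub>0 int)" where
  "sur_id X = frag_of (map (\<lambda>x. (x, x)) (enum_set X))"

definition surHom :: "'a set \<Rightarrow> 'a set \<Rightarrow> ('a corr \<Rightarrow>\<^sub>0 int) set" where
  "surHom X Y = {a. \<forall>c\<in>Poly_Mapping.keys a. corr_src c = X \<and> corr_tgt c = Y}"

definition sur_rel :: "nat \<Rightarrow> ('a corr \<Rightarrow>\<^sub>0 int) set" where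
  "sur_rel n = {frag_of c - frag_of c' | c c'. corr_iso c c'} \<union> {frag_of c | c. length c > n}"

definition sur_ideal :: "nat \<Rightarrow> ('a corr \<Rightarrow>\<^sub>0 int) set" where
  "sur_ideal n = gen_ideal sur_comp (sur_rel n)"

text \<open>A maze is a finite multi-set of passages (source, label, target), encoded as a list
  (occurrences = list positions); lists with the same multiset are identified by a relation.\<close>
type_synonym 'a maze = "('a \<times> int \<times> 'a) list"

definition psrc :: "'a \<times> int \<times> 'a \<Rightarrow> 'a" where "psrc p = fst p"
definition plab :: "'a \<times> int \<times> 'a \<Rightarrow> int" where "plab p = fst (snd p)"
definition ptgt :: "'a \<times> int \<times> 'a \<Rightarrow> 'a" where "ptgt p = snd (snd p)"

definition maze_src :: "'a maze \<Rightarrow> 'a set" where "maze_src P = psrc ` set P"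
definition maze_tgt :: "'a maze \<Rightarrow> 'a set" where "maze_tgt P = ptgt ` set P"

definition maze_perm :: "'a maze \<Rightarrow> 'a maze \<Rightarrow> bool" where
  "maze_perm P P' \<longleftrightarrow> length P = length P' \<and>
     (\<exists>\<pi>. bij_betw \<pi> {..<length P} {..<length P'} \<and> (\<forall>i<length P. P' ! (\<pi> i) = P ! i))"

text \<open>Composition P o Q (Q : X -> Y first, then P : Y -> Z): sum over sub-multisets U of the
  composable pairs of occurrences using every occurrence of P and of Q.\<close>
definition maze_pairings :: "'a maze \<Rightarrow> 'a maze \<Rightarrow> (nat \<times> nat) set set" where
  "maze_pairings P Q = {U. U \<subseteq> {(i,j). i < length P \<and> j < length Q \<and> psrc (P!i) = ptgt (Q!j)}
       \<and> fst ` U = {..<length P} \<and> snd ` U = {..<length Q}}"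

definition laby_comp_gen :: "'a maze \<Rightarrow> 'a maze \<Rightarrow> ('a maze \<Rightarrow>\<^sub>0 int)" where
  "laby_comp_gen P Q = (\<Sum>U\<in>maze_pairings P Q.
      frag_of (map (\<lambda>(i,j). (psrc (Q!j), plab (P!i) * plab (Q!j), ptgt (P!i))) (sorted_list_of_set U)))"

definition laby_comp :: "('a maze \<Rightarrow>\<^sub>0 int) \<Rightarrow> ('a maze \<Rightarrow>\<^sub>0 int) \<Rightarrow> ('a maze \<Rightarrow>\<^sub>0 int)" where
  "laby_comp = bilin laby_comp_gen"

definition laby_id :: "'a set \<Rightarrow> ('a maze \<Rightarrow>\<^sub>0 int)" where
  "laby_id X = frag_of (map (\<lambda>x. (x, 1, x)) (enum_set X))"

definition labyHom :: "'a set \<Rightarrow> 'a set \<Rightarrow> ('a maze \<Rightarrow>\<^sub>0 int) set" where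
  "labyHom X Y = {b. \<forall>P\<in>Poly_Mapping.keys b. maze_src P = X \<and> maze_tgt P = Y}"

text \<open>Generalized binomial coefficient for integer top entry: a(a-1)...(a-k+1)/k!
  (the division is exact).\<close>
definition int_binom :: "int \<Rightarrow> nat \<Rightarrow> int" where
  "int_binom a k = (\<Prod>i<k. a - int i) div fact k"

definition maze_I :: "'a maze \<Rightarrow> nat list \<Rightarrow> 'a maze" where
  "maze_I P d = concat (map (\<lambda>(p, k). replicate k (psrc p, 1, ptgt p)) (zip P d))"

text \<open>Multiplicity vectors d with 1 <= d_p; entries > n give |I_d| > n, i.e. 0 in Laby_n,
  so the sum is restricted to d_p <= n (a finite range containing all nonzero terms).\<close>
definition mult_vectors :: "nat \<Rightarrow> 'a maze \<Rightarrow> nat list set" where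
  "mult_vectors n P = {d. length d = length P \<and> set d \<subseteq> {1..n}}"

definition laby_rel :: "nat \<Rightarrow> ('a maze \<Rightarrow>\<^sub>0 int) set" where
  "laby_rel n =
     {frag_of P - frag_of P' | P P'. maze_perm P P'}
   \<union> {frag_of (P @ [(x, 0, y)]) | P x y. True}
   \<union> {frag_of (P @ [(x, a + b, y)]) - frag_of (P @ [(x, a, y)]) - frag_of (P @ [(x, b, y)])
        - frag_of (P @ [(x, a, y), (x, b, y)]) | P x y a b. True}
   \<union> {frag_of P | P. length P > n}
   \<union> {frag_of P - (\<Sum>d\<in>mult_vectors n P.
          frag_cmul (\<Prod>i<length P. int_binom (plab (P!i)) (d!i)) (frag_of (maze_I P d))) | P. True}"

definition laby_ideal :: "nat \<Rightarrow> ('a maze \<Rightarrow>\<^sub>0 int) set" where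
  "laby_ideal n = gen_ideal laby_comp (laby_rel n)"

text \<open>A correspondence is sent to the pure maze with |(phi^*,phi_*)^{-1}(x,y)| passages x -> y:
  one label-1 passage (phi^* u, 1, phi_* u) for each u in U; extended Z-linearly.\<close>
definition corr_to_maze :: "'a corr \<Rightarrow> 'a maze" where
  "corr_to_maze c = map (\<lambda>(x, y). (x, 1, y)) c"

definition Phi :: "('a corr \<Rightarrow>\<^sub>0 int) \<Rightarrow> ('a maze \<Rightarrow>\<^sub>0 int)" where
  "Phi = frag_extend (\<lambda>c. frag_of (corr_to_maze c))"

end

theory Submission imports Defs "HOL-Combinatorics.List_Permutation" "HOL-Computational_Algebra.Formal_Power_Series" begin

text \<open>Phi is a functor on the nose, preserves the relations, and is full modulo the relation that
  expands a maze into the pure mazes I_d; the content of the theorem is that Phi reflects the ideal.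
  For this a maze P is weighted in the group ring of multisets of edges (x, y), truncated above
  degree n, by the product over its passages p of ((1 + X_(src p, tgt p)) ^ label p) - 1, the
  binomial series being cut off at degree n. The additivity relation becomes
  (1 + X) ^ (a + b) = (1 + X) ^ a * (1 + X) ^ b, mazes with more than n passages land in degree > n,
  and the expansion relation is the binomial expansion itself. Compatibility with composition is a
  count of weak pull-backs of the pure mazes I_d, I_e for natural labels, extended to integer
  labels by inverting binomial transforms and a Moebius inversion over supports. On the image of
  Phi the weight is the multiset of edges of the correspondence. Isomorphic correspondences have
  the same edge multiset, so a combination whose edge multisets cancel up to size n lies in the
  ideal of Sur_n.\<close>

section \<open>Truncation by degree in the group ring of multisets\<close>

lemma frag_cmul_of_int: "frag_cmul c x = of_int c * (x :: 'k::monoid_add \<Rightarrow>\<^sub>0 int)"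
proof -
  have e: "Poly_Mapping.single (0::'k) (of_int c :: int) = of_int c" by (rule single_of_int)
  have "of_int c * x = Poly_Mapping.single 0 c * x"
    using e by simp
  also have "\<dots> = Poly_Mapping.map ((*) c) x" by (simp add: mult_map_scale_conv_mult)
  finally show ?thesis
    by (intro poly_mapping_eqI) (simp add: Poly_Mapping.map.rep_eq when_def)
qed

lemma frag_of_mult: "frag_of (M::'b::monoid_add) * frag_of N = frag_of (M + N)"
  by (simp add: mult_single)

definition deg_ge :: "nat \<Rightarrow> ('b multiset \<Rightarrow>\<^sub>0 int) set" where
  "deg_ge k = {y. \<forall>M\<in>Poly_Mapping.keys y. k \<le> size M}"

lemma deg_ge_0 [simp]: "0 \<in> deg_ge k" by (simp add: deg_ge_def)

lemma deg_ge_add: "x \<in> deg_ge k \<Longrightarrow> y \<in> deg_ge k \<Longrightarrow> x + y \<in> deg_ge k"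
  using keys_add[of x y] by (auto simp: deg_ge_def)

lemma deg_ge_uminus: "x \<in> deg_ge k \<Longrightarrow> - x \<in> deg_ge k"
  by (auto simp: deg_ge_def in_keys_iff)

lemma deg_ge_diff: "x \<in> deg_ge k \<Longrightarrow> y \<in> deg_ge k \<Longrightarrow> x - y \<in> deg_ge k"
  using deg_ge_add[of x k "-y"] deg_ge_uminus[of y k] by simp

lemma deg_ge_sum: "(\<And>i. i \<in> I \<Longrightarrow> f i \<in> deg_ge k) \<Longrightarrow> sum f I \<in> deg_ge k"
  by (induction I rule: infinite_finite_induct) (auto intro: deg_ge_add)

lemma deg_ge_mult: "x \<in> deg_ge k \<Longrightarrow> y \<in> deg_ge l \<Longrightarrow> x * y \<in> deg_ge (k + l)"
proof -
  assume "x \<in> deg_ge k" "y \<in> deg_ge l"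
  then show ?thesis using keys_mult[of x y]
    unfolding deg_ge_def by (fastforce simp: size_union add_mono)
qed

lemma deg_ge_mono: "x \<in> deg_ge k \<Longrightarrow> l \<le> k \<Longrightarrow> x \<in> deg_ge l"
  by (auto simp: deg_ge_def)

lemma deg_ge_mult_left: "y \<in> deg_ge l \<Longrightarrow> x * y \<in> deg_ge l"
  using deg_ge_mult[of x 0 y l] by (simp add: deg_ge_def)

lemma deg_ge_mult_right: "x \<in> deg_ge l \<Longrightarrow> x * y \<in> deg_ge l"
  using deg_ge_mult[of x l y 0] by (simp add: deg_ge_def)

lemma deg_ge_cmul: "y \<in> deg_ge l \<Longrightarrow> frag_cmul c y \<in> deg_ge l"
  by (simp add: frag_cmul_of_int deg_ge_mult_left)

lemma deg_ge_power: "x \<in> deg_ge k \<Longrightarrow> x ^ m \<in> deg_ge (k * m)"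
proof (induction m)
  case 0 then show ?case by (simp add: deg_ge_def)
next
  case (Suc m) then show ?case using deg_ge_mult[of x k "x^m" "k*m"] by simp
qed

lemma deg_ge_prod: "finite I \<Longrightarrow> (\<And>i. i \<in> I \<Longrightarrow> f i \<in> deg_ge k) \<Longrightarrow> prod f I \<in> deg_ge (k * card I)"
proof (induction I rule: finite_induct)
  case empty then show ?case by (simp add: deg_ge_def)
next
  case (insert a I) then show ?case using deg_ge_mult[of "f a" k "prod f I" "k * card I"]
    by (simp add: algebra_simps)
qed

lemma deg_ge_frag_of: "k \<le> size M \<Longrightarrow> frag_of M \<in> deg_ge k"
  by (simp add: deg_ge_def)

definition deg_gt :: "nat \<Rightarrow> ('b multiset \<Rightarrow>\<^sub>0 int) set" where "deg_gt n = deg_ge (Suc n)"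

lemma deg_gt_0 [simp]: "0 \<in> deg_gt n" by (simp add: deg_gt_def)

lemma deg_gt_diff: "x \<in> deg_gt n \<Longrightarrow> y \<in> deg_gt n \<Longrightarrow> x - y \<in> deg_gt n" by (simp add: deg_gt_def deg_ge_diff)

definition trunc_eq :: "nat \<Rightarrow> ('b multiset \<Rightarrow>\<^sub>0 int) \<Rightarrow> ('b multiset \<Rightarrow>\<^sub>0 int) \<Rightarrow> bool" where
  "trunc_eq n x y \<longleftrightarrow> x - y \<in> deg_gt n"

lemma trunc_eq_refl [simp]: "trunc_eq n x x" by (simp add: trunc_eq_def deg_gt_def)

lemma trunc_eq_sym: "trunc_eq n x y \<Longrightarrow> trunc_eq n y x"
  unfolding trunc_eq_def deg_gt_def by (metis deg_ge_uminus minus_diff_eq)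

lemma trunc_eq_trans [trans]: "trunc_eq n x y \<Longrightarrow> trunc_eq n y z \<Longrightarrow> trunc_eq n x z"
  unfolding trunc_eq_def deg_gt_def using deg_ge_add by fastforce

lemma trunc_eq_add: "trunc_eq n x y \<Longrightarrow> trunc_eq n x' y' \<Longrightarrow> trunc_eq n (x + x') (y + y')"
  unfolding trunc_eq_def deg_gt_def using deg_ge_add by (fastforce simp: algebra_simps)

lemma trunc_eq_mult: "trunc_eq n x y \<Longrightarrow> trunc_eq n x' y' \<Longrightarrow> trunc_eq n (x * x') (y * y')"
proof -
  assume a: "trunc_eq n x y" "trunc_eq n x' y'"
  have "x * x' - y * y' = (x - y) * x' + y * (x' - y')" by (simp add: algebra_simps)
  then show ?thesis using a unfolding trunc_eq_def deg_gt_def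
    by (metis deg_ge_add deg_ge_mult_left deg_ge_mult_right)
qed

lemma trunc_eq_sum: "(\<And>i. i \<in> I \<Longrightarrow> trunc_eq n (f i) (g i)) \<Longrightarrow> trunc_eq n (sum f I) (sum g I)"
  by (induction I rule: infinite_finite_induct) (auto intro: trunc_eq_add)

lemma trunc_eq_prod: "(\<And>i. i \<in> I \<Longrightarrow> trunc_eq n (f i) (g i)) \<Longrightarrow> trunc_eq n (prod f I) (prod g I)"
  by (induction I rule: infinite_finite_induct) (auto intro: trunc_eq_mult)

lemma trunc_eq_cmul: "trunc_eq n x y \<Longrightarrow> trunc_eq n (frag_cmul c x) (frag_cmul c y)"
  by (simp add: frag_cmul_of_int trunc_eq_mult)

lemma int_binom_gbinomial: "rat_of_int (int_binom a k) = (rat_of_int a) gchoose k"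
proof -
  have "\<exists>c. (rat_of_int a) gchoose k = rat_of_int c"
  proof (cases "a \<ge> 0")
    case True
    then obtain m where "a = int m" by (metis nonneg_eq_int)
    then show ?thesis using binomial_gbinomial[of m k, where 'a=rat]
      by (metis of_int_of_nat_eq)
  next
    case False
    then have "int k - a - 1 \<ge> 0" by simp
    then obtain m where "int k - a - 1 = int m" by (metis nonneg_eq_int)
    then have m: "of_nat k - rat_of_int a - 1 = of_nat m"
      by (metis of_int_1 of_int_diff of_int_of_nat_eq)
    show ?thesis using gbinomial_negated_upper[of "rat_of_int a" k] m binomial_gbinomial[of m k, where 'a=rat]
      by (metis of_int_minus of_int_of_nat_eq of_int_1 of_int_mult of_int_power)
  qed
  then obtain c where c: "(rat_of_int a) gchoose k = rat_of_int c" by blast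
  have "fact k * rat_of_int c = (\<Prod>i = 0..<k. rat_of_int a - of_nat i)"
    using gbinomial_mult_fact[of k "rat_of_int a"] c by simp
  then have "rat_of_int (fact k * c) = rat_of_int (\<Prod>i<k. a - int i)" by (simp add: atLeast0LessThan)
  then have e: "fact k * c = (\<Prod>i<k. a - int i)" using of_int_eq_iff by blast
  have "int_binom a k = c" unfolding int_binom_def e[symmetric] by simp
  then show ?thesis using c by simp
qed

lemma int_binom_0 [simp]: "int_binom a 0 = 1"
  by (simp add: int_binom_def)

lemma int_binom_zero_Suc [simp]: "int_binom 0 (Suc k) = 0"
  using int_binom_gbinomial[of 0 "Suc k"] by simp

lemma int_binom_zero: "k \<ge> 1 \<Longrightarrow> int_binom 0 k = 0"
  by (cases k) auto

lemma int_binom_of_nat: "int_binom (int m) k = int (m choose k)"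
  using int_binom_gbinomial[of "int m" k] binomial_gbinomial[of m k, where 'a=rat]
  by (metis of_int_eq_iff of_int_of_nat_eq)

lemma int_binom_1: "int_binom 1 k = (if k \<le> 1 then 1 else 0)"
  using int_binom_of_nat[of 1 k] by (cases k) (auto simp: binomial_eq_0)

lemma int_binom_Vandermonde: "int_binom (a + b) k = (\<Sum>i\<le>k. int_binom a i * int_binom b (k - i))"
proof -
  have "rat_of_int (int_binom (a + b) k) = rat_of_int (\<Sum>i\<le>k. int_binom a i * int_binom b (k - i))"
    using gbinomial_Vandermonde[of "rat_of_int a" "rat_of_int b" k]
    by (simp add: int_binom_gbinomial atLeast0AtMost)
  then show ?thesis by (simp only: of_int_eq_iff)
qed

section \<open>The truncated binomial series\<close>

definition trunc_pow :: "nat \<Rightarrow> int \<Rightarrow> ('b multiset \<Rightarrow>\<^sub>0 int) \<Rightarrow> ('b multiset \<Rightarrow>\<^sub>0 int)" where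
  "trunc_pow n a N = (\<Sum>k\<le>n. of_int (int_binom a k) * N ^ k)"

lemma sum_atMost_split_0: "(\<Sum>k\<le>n. f k) = f 0 + (\<Sum>k\<in>{1..n}. f k)" for f :: "nat \<Rightarrow> 'c::comm_monoid_add"
proof -
  have "{..n} = insert 0 {1..n}" by auto
  then show ?thesis by simp
qed

lemma trunc_pow_0 [simp]: "trunc_pow n 0 N = 1"
  unfolding trunc_pow_def by (subst sum_atMost_split_0) (simp add: int_binom_zero)

lemma trunc_pow_base_0 [simp]: "trunc_pow n a 0 = 1"
  unfolding trunc_pow_def by (subst sum_atMost_split_0) (auto intro!: sum.neutral simp: power_0_left)

lemma power_deg_ge_1: "N \<in> deg_ge 1 \<Longrightarrow> 1 \<le> i \<Longrightarrow> N ^ i \<in> deg_ge 1"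
  using deg_ge_power[of N 1 i] deg_ge_mono by auto

lemma trunc_pow_minus_1: "trunc_pow n a N - 1 = (\<Sum>k\<in>{1..n}. of_int (int_binom a k) * N ^ k)"
  unfolding trunc_pow_def by (subst sum_atMost_split_0) simp

lemma trunc_pow_minus_1_deg_ge: "N \<in> deg_ge 1 \<Longrightarrow> trunc_pow n a N - 1 \<in> deg_ge 1"
  unfolding trunc_pow_minus_1
  by (intro deg_ge_sum) (auto intro!: deg_ge_mult_left power_deg_ge_1[where N=N, simplified])

lemma trunc_pow_1: assumes N: "N \<in> deg_ge 1" shows "trunc_eq n (trunc_pow n 1 N) (1 + N)"
proof (cases n)
  case 0
  then show ?thesis using deg_ge_uminus[OF N]
    by (simp add: trunc_pow_def trunc_eq_def deg_gt_def)
next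
  case (Suc m)
  have "trunc_pow n 1 N - 1 = (\<Sum>k\<in>{1..n}. of_int (int_binom 1 k) * N ^ k)" by (rule trunc_pow_minus_1)
  also have "\<dots> = (\<Sum>k\<in>{1}. of_int (int_binom 1 k) * N ^ k)"
    by (rule sum.mono_neutral_right) (auto simp: int_binom_1 Suc)
  finally have "trunc_pow n 1 N - 1 = N" by (simp add: int_binom_1)
  then have "trunc_pow n 1 N = 1 + N" by (metis add.commute diff_add_cancel)
  then show ?thesis by simp
qed

lemma trunc_pow_add:
  assumes N: "N \<in> deg_ge 1"
  shows "trunc_eq n (trunc_pow n (a + b) N) (trunc_pow n a N * trunc_pow n b N)"
proof -
  define g where "g i j = of_int (int_binom a i * int_binom b j) * N ^ (i + j)" for i j
  have "trunc_pow n a N * trunc_pow n b N = (\<Sum>i\<le>n. \<Sum>j\<le>n. g i j)"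
    unfolding trunc_pow_def g_def by (simp add: sum_product power_add algebra_simps)
  also have "\<dots> = (\<Sum>(i,j)\<in>{..n}\<times>{..n}. g i j)" by (simp add: sum.cartesian_product)
  also have "\<dots> = (\<Sum>(i,j)\<in>{(i,j). i + j \<le> n}. g i j) + (\<Sum>(i,j)\<in>{..n}\<times>{..n} - {(i,j). i + j \<le> n}. g i j)"
  proof -
    have "{(i,j). i + j \<le> n} \<subseteq> {..n}\<times>{..n}" by auto
    then show ?thesis by (subst sum.subset_diff[of "{(i,j). i + j \<le> n}"]) auto
  qed
  finally have e: "trunc_pow n a N * trunc_pow n b N = (\<Sum>(i,j)\<in>{(i,j). i + j \<le> n}. g i j) + (\<Sum>(i,j)\<in>{..n}\<times>{..n} - {(i,j). i + j \<le> n}. g i j)" .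
  have r: "(\<Sum>(i,j)\<in>{..n}\<times>{..n} - {(i,j). i + j \<le> n}. g i j) \<in> deg_gt n"
    unfolding deg_gt_def
  proof (intro deg_ge_sum)
    fix p assume "p \<in> {..n}\<times>{..n} - {(i,j). i + j \<le> n}"
    then obtain i j where p: "p = (i,j)" "Suc n \<le> i + j" by auto
    have "N ^ (i+j) \<in> deg_ge (1 * (i + j))" by (rule deg_ge_power[OF N])
    then show "(case p of (i,j) \<Rightarrow> g i j) \<in> deg_ge (Suc n)"
      unfolding p g_def by (auto intro: deg_ge_mult_left deg_ge_mono[OF _ p(2)])
  qed
  have t: "(\<Sum>(i,j)\<in>{(i,j). i + j \<le> n}. g i j) = trunc_pow n (a + b) N"
    unfolding sum.triangle_reindex_eq trunc_pow_def int_binom_Vandermonde g_def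
    by (simp add: sum_distrib_right)
  show ?thesis using r e t deg_ge_uminus by (simp add: trunc_eq_def deg_gt_def)
qed

lemma trunc_pow_plus_1: "N \<in> deg_ge 1 \<Longrightarrow> trunc_eq n (trunc_pow n (a + 1) N) (trunc_pow n a N * (1 + N))"
  using trunc_pow_add[of N n a 1] trunc_pow_1[of N n] by (meson trunc_eq_mult trunc_eq_refl trunc_eq_trans)

lemma trunc_pow_minus_one_inverse: "N \<in> deg_ge 1 \<Longrightarrow> trunc_eq n (trunc_pow n (-1) N * (1 + N)) 1"
proof -
  assume N: "N \<in> deg_ge 1"
  have "trunc_eq n (trunc_pow n (-1 + 1) N) (trunc_pow n (-1) N * (1 + N))" by (rule trunc_pow_plus_1[OF N])
  then show ?thesis by (simp add: trunc_eq_sym)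
qed

lemma trunc_pow_unique:
  assumes N: "N \<in> deg_ge 1" and z: "trunc_eq n (\<phi> 0) 1" and s: "\<And>a. trunc_eq n (\<phi> (a + 1)) (\<phi> a * (1 + N))"
  shows "trunc_eq n (\<phi> a) (trunc_pow n a N)"
proof (induction a rule: int_induct[where k=0])
  case base then show ?case using z by simp
next
  case (step1 i)
  then show ?case using s[of i] trunc_pow_plus_1[OF N, of n i]
    by (meson trunc_eq_mult trunc_eq_refl trunc_eq_sym trunc_eq_trans)
next
  case (step2 i)
  have "trunc_eq n (\<phi> (i - 1)) (\<phi> (i - 1) * (1 + N) * trunc_pow n (-1) N)"
    using trunc_pow_minus_one_inverse[OF N, of n] trunc_eq_mult[OF trunc_eq_refl[of n "\<phi> (i - 1)"]] trunc_eq_sym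
    by (metis mult.assoc mult.commute mult_1_right)
  moreover have "trunc_eq n (\<phi> (i - 1) * (1 + N)) (\<phi> i)" using s[of "i - 1"] trunc_eq_sym by simp
  moreover have "trunc_eq n (trunc_pow n i N * trunc_pow n (-1) N) (trunc_pow n (i - 1) N)"
    using trunc_pow_add[OF N, of n i "-1"] trunc_eq_sym by simp
  ultimately show ?case using step2
    by (meson trunc_eq_mult trunc_eq_refl trunc_eq_trans)
qed

lemma one_plus_mult_deg_ge_1: "N \<in> deg_ge 1 \<Longrightarrow> N' \<in> deg_ge 1 \<Longrightarrow> (1 + N) * (1 + N') - 1 \<in> deg_ge 1"
proof -
  assume a: "N \<in> deg_ge 1" "N' \<in> deg_ge 1"
  have "(1 + N) * (1 + N') - 1 = N + N' + N * N'" by (simp add: algebra_simps)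
  then show ?thesis using a by (metis deg_ge_add deg_ge_mult_left)
qed

lemma trunc_pow_mult_base:
  assumes N: "N \<in> deg_ge 1" and N': "N' \<in> deg_ge 1"
  shows "trunc_eq n (trunc_pow n a ((1 + N) * (1 + N') - 1)) (trunc_pow n a N * trunc_pow n a N')"
proof -
  let ?M = "(1 + N) * (1 + N') - 1"
  have "trunc_eq n (trunc_pow n a N * trunc_pow n a N') (trunc_pow n a ?M)"
  proof (rule trunc_pow_unique[OF one_plus_mult_deg_ge_1[OF N N']])
    show "trunc_eq n (trunc_pow n 0 N * trunc_pow n 0 N') 1" by simp
    fix a
    have "trunc_eq n (trunc_pow n (a + 1) N * trunc_pow n (a + 1) N') (trunc_pow n a N * (1 + N) * (trunc_pow n a N' * (1 + N')))"
      by (intro trunc_eq_mult trunc_pow_plus_1 N N')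
    then show "trunc_eq n (trunc_pow n (a + 1) N * trunc_pow n (a + 1) N') (trunc_pow n a N * trunc_pow n a N' * (1 + ?M))"
      by (simp add: algebra_simps)
  qed
  then show ?thesis by (rule trunc_eq_sym)
qed

lemma trunc_pow_trunc_pow:
  assumes N: "N \<in> deg_ge 1"
  shows "trunc_eq n (trunc_pow n a (trunc_pow n b N - 1)) (trunc_pow n (a * b) N)"
proof -
  have "trunc_eq n (trunc_pow n (a * b) N) (trunc_pow n a (trunc_pow n b N - 1))"
  proof (rule trunc_pow_unique[OF trunc_pow_minus_1_deg_ge[OF N]])
    show "trunc_eq n (trunc_pow n (0 * b) N) 1" by simp
    fix a
    have "trunc_eq n (trunc_pow n (a * b + b) N) (trunc_pow n (a * b) N * trunc_pow n b N)" by (rule trunc_pow_add[OF N])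
    then show "trunc_eq n (trunc_pow n ((a + 1) * b) N) (trunc_pow n (a * b) N * (1 + (trunc_pow n b N - 1)))"
      by (simp add: algebra_simps)
  qed
  then show ?thesis by (rule trunc_eq_sym)
qed

definition vecs :: "'c set \<Rightarrow> nat \<Rightarrow> 'c list set" where
  "vecs S m = {d. length d = m \<and> set d \<subseteq> S}"

lemma finite_vecs: "finite S \<Longrightarrow> finite (vecs S m)"
  unfolding vecs_def using finite_lists_length_eq[of S m] by (simp add: conj_commute)

lemma vecs_0: "vecs S 0 = {[]}" by (auto simp: vecs_def)

lemma vecs_Suc: "vecs S (Suc m) = (\<lambda>(t,d). t # d) ` (S \<times> vecs S m)"
  unfolding vecs_def
  by (auto simp: length_Suc_conv image_iff)

lemma inj_on_case_Cons: "inj_on (\<lambda>(t,d). t # d) A" by (auto simp: inj_on_def)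

lemma sum_vecs_prod:
  fixes f :: "nat \<Rightarrow> 'c \<Rightarrow> 'r::comm_semiring_1"
  assumes "finite S"
  shows "(\<Sum>d\<in>vecs S m. \<Prod>i<m. f i (d ! i)) = (\<Prod>i<m. \<Sum>t\<in>S. f i t)"
proof (induction m arbitrary: f)
  case 0 then show ?case by (simp add: vecs_0)
next
  case (Suc m)
  have "(\<Sum>d\<in>vecs S (Suc m). \<Prod>i<Suc m. f i (d ! i))
      = (\<Sum>(t,d)\<in>S \<times> vecs S m. \<Prod>i<Suc m. f i ((t # d) ! i))"
    unfolding vecs_Suc by (subst sum.reindex[OF inj_on_case_Cons]) (simp add: case_prod_beta)
  also have "\<dots> = (\<Sum>(t,d)\<in>S \<times> vecs S m. f 0 t * (\<Prod>i<m. f (Suc i) (d ! i)))"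
    by (simp only: prod.lessThan_Suc_shift) simp
  also have "\<dots> = (\<Sum>t\<in>S. f 0 t) * (\<Sum>d\<in>vecs S m. \<Prod>i<m. f (Suc i) (d ! i))"
    by (simp add: sum.cartesian_product[symmetric] sum_product)
  also have "\<dots> = (\<Sum>t\<in>S. f 0 t) * (\<Prod>i<m. \<Sum>t\<in>S. f (Suc i) t)" using Suc.IH[of "\<lambda>i. f (Suc i)"] by simp
  also have "\<dots> = (\<Prod>i<Suc m. \<Sum>t\<in>S. f i t)" by (simp only: prod.lessThan_Suc_shift)
  finally show ?case .
qed

lemma mult_vectors_eq_vecs: "mult_vectors n P = vecs {1..n} (length P)"
  by (simp add: mult_vectors_def vecs_def)

lemma finite_mult_vectors: "finite (mult_vectors n P)"
  by (simp add: mult_vectors_eq_vecs finite_vecs)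

section \<open>The weight of a maze\<close>

definition maze_corr :: "'a maze \<Rightarrow> 'a corr" where "maze_corr R = map (\<lambda>(x,l,y). (x,y)) R"

definition mult_coeff :: "'a maze \<Rightarrow> nat list \<Rightarrow> int" where
  "mult_coeff P d = (\<Prod>i<length P. int_binom (plab (P!i)) (d!i))"

definition passage_edge :: "'a \<times> int \<times> 'a \<Rightarrow> 'a \<times> 'a" where "passage_edge p = (psrc p, ptgt p)"

definition edge_var :: "'a \<times> 'a \<Rightarrow> (('a \<times> 'a) multiset \<Rightarrow>\<^sub>0 int)" where "edge_var e = frag_of {#e#}"

text \<open>The expansion of P into the pure mazes I_d, each read as the multiset of its edges;
  by maze_weight_prod this is the product of truncated powers ((1 + X_p) ^ label p) - 1.\<close>
definition maze_weight :: "nat \<Rightarrow> 'a maze \<Rightarrow> (('a \<times> 'a) multiset \<Rightarrow>\<^sub>0 int)" where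
  "maze_weight n P = (\<Sum>d\<in>mult_vectors n P. frag_cmul (mult_coeff P d) (frag_of (mset (maze_corr (maze_I P d)))))"

definition laby_weight :: "nat \<Rightarrow> ('a maze \<Rightarrow>\<^sub>0 int) \<Rightarrow> (('a \<times> 'a) multiset \<Rightarrow>\<^sub>0 int)" where
  "laby_weight n = frag_extend (maze_weight n)"

lemma mset_maze_corr_maze_I:
  "length d = length P \<Longrightarrow>
    mset (maze_corr (maze_I P d)) = (\<Sum>i<length P. replicate_mset (d!i) (passage_edge (P!i)))"
proof (induction P arbitrary: d)
  case Nil then show ?case by (simp add: maze_I_def maze_corr_def)
next
  case (Cons p P)
  then obtain t d' where d: "d = t # d'" "length d' = length P" by (cases d) auto
  have "maze_I (p # P) d = replicate t (psrc p, 1, ptgt p) @ maze_I P d'"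
    by (simp add: maze_I_def d)
  then have "mset (maze_corr (maze_I (p # P) d)) = replicate_mset t (passage_edge p) + mset (maze_corr (maze_I P d'))"
    by (simp add: maze_corr_def passage_edge_def mset_map)
  also have "\<dots> = replicate_mset t (passage_edge p) + (\<Sum>i<length P. replicate_mset (d'!i) (passage_edge (P!i)))"
    using Cons d by simp
  also have "\<dots> = (\<Sum>i<length (p # P). replicate_mset (d!i) (passage_edge ((p # P)!i)))"
    by (simp only: length_Cons sum.lessThan_Suc_shift d) simp
  finally show ?case .
qed

lemma frag_of_sum: "frag_of (\<Sum>i\<in>I. M i) = (\<Prod>i\<in>I. frag_of (M i))" for M :: "'i \<Rightarrow> 'b multiset"
  by (induction I rule: infinite_finite_induct) (auto simp: frag_of_mult[symmetric])

lemma frag_of_replicate_mset: "frag_of (replicate_mset k e) = edge_var e ^ k"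
proof (induction k)
  case 0 then show ?case by simp
next
  case (Suc k)
  have "replicate_mset (Suc k) e = {#e#} + replicate_mset k e" by simp
  then show ?case using Suc by (simp only: frag_of_mult[symmetric] edge_var_def power_Suc)
qed

lemma maze_weight_prod: "maze_weight n P = (\<Prod>i<length P. trunc_pow n (plab (P!i)) (edge_var (passage_edge (P!i))) - 1)"
proof -
  have "maze_weight n P = (\<Sum>d\<in>vecs {1..n} (length P). \<Prod>i<length P. of_int (int_binom (plab (P!i)) (d!i)) * edge_var (passage_edge (P!i)) ^ (d!i))"
    unfolding maze_weight_def mult_vectors_eq_vecs
  proof (rule sum.cong[OF refl])
    fix d assume "d \<in> vecs {1..n} (length P)"
    then have l: "length d = length P" by (simp add: vecs_def)
    show "frag_cmul (mult_coeff P d) (frag_of (mset (maze_corr (maze_I P d)))) =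
        (\<Prod>i<length P. of_int (int_binom (plab (P!i)) (d!i)) * edge_var (passage_edge (P!i)) ^ (d!i))"
      by (simp add: mset_maze_corr_maze_I[OF l] frag_of_sum frag_of_replicate_mset frag_cmul_of_int mult_coeff_def
          prod.distrib)
  qed
  also have "\<dots> = (\<Prod>i<length P. \<Sum>t\<in>{1..n}. of_int (int_binom (plab (P!i)) t) * edge_var (passage_edge (P!i)) ^ t)"
    by (rule sum_vecs_prod) simp
  also have "\<dots> = (\<Prod>i<length P. trunc_pow n (plab (P!i)) (edge_var (passage_edge (P!i))) - 1)"
    by (simp add: trunc_pow_minus_1)
  finally show ?thesis .
qed

lemma edge_var_deg_ge_1: "edge_var e \<in> deg_ge 1" by (simp add: edge_var_def deg_ge_def)

section \<open>Counting weak pull-backs\<close>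

definition pullback_edge :: "'a corr \<Rightarrow> 'a corr \<Rightarrow> nat \<times> nat \<Rightarrow> 'a \<times> 'a" where
  "pullback_edge v u = (\<lambda>(i,j). (fst (u!j), snd (v!i)))"

definition comp_pairs :: "'a corr \<Rightarrow> 'a corr \<Rightarrow> (nat \<times> nat) set" where
  "comp_pairs v u = {(i,j). i < length v \<and> j < length u \<and> fst (v!i) = snd (u!j)}"

definition pullbacks_onto :: "'a corr \<Rightarrow> 'a corr \<Rightarrow> nat set \<Rightarrow> nat set \<Rightarrow> (nat \<times> nat) set set" where
  "pullbacks_onto v u A B = {S. S \<subseteq> comp_pairs v u \<and> fst ` S = A \<and> snd ` S = B}"

lemma weak_pullbacks_eq: "weak_pullbacks v u = pullbacks_onto v u {..<length v} {..<length u}"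
  by (simp add: weak_pullbacks_def pullbacks_onto_def comp_pairs_def)

lemma finite_comp_pairs: "finite (comp_pairs v u)"
  by (rule finite_subset[of _ "{..<length v} \<times> {..<length u}"]) (auto simp: comp_pairs_def)

lemma finite_pullbacks_onto: "finite (pullbacks_onto v u A B)"
  by (rule finite_subset[of _ "Pow (comp_pairs v u)"]) (auto simp: pullbacks_onto_def finite_comp_pairs)

definition pullback_sum :: "'a corr \<Rightarrow> 'a corr \<Rightarrow> (('a \<times> 'a) multiset \<Rightarrow>\<^sub>0 int)" where
  "pullback_sum v u = (\<Sum>W\<in>weak_pullbacks v u. frag_of (image_mset (pullback_edge v u) (mset_set W)))"

definition corr_class :: "('a corr \<Rightarrow>\<^sub>0 int) \<Rightarrow> (('a \<times> 'a) multiset \<Rightarrow>\<^sub>0 int)" where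
  "corr_class = frag_extend (\<lambda>c. frag_of (mset c))"

lemma mset_sorted_set: "mset (sorted_list_of_set A) = mset_set A"
  by (metis mset_sorted_list_of_multiset sorted_list_of_mset_set)

lemma pullbacks_onto_eq_Collect:
  "pullbacks_onto v u A B = {S \<in> Pow (A \<times> B). S \<subseteq> comp_pairs v u \<and> fst ` S = A \<and> snd ` S = B}"
  by (auto simp: pullbacks_onto_def intro: rev_image_eqI)

lemma bij_betw_pullbacks_onto:
  assumes f: "bij_betw f {..<length v} A" and g: "bij_betw g {..<length u} B"
    and A: "A \<subseteq> {..<length V}" and B: "B \<subseteq> {..<length U}"
    and fv: "\<And>i. i < length v \<Longrightarrow> V ! (f i) = v ! i"
    and gu: "\<And>j. j < length u \<Longrightarrow> U ! (g j) = u ! j"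
  shows "bij_betw (image (map_prod f g)) (pullbacks_onto v u {..<length v} {..<length u}) (pullbacks_onto V U A B)"
  unfolding pullbacks_onto_eq_Collect
proof (rule bij_betw_Collect[OF bij_betw_image_Pow[OF bij_betw_map_prod[OF f g]]])
  fix W assume "W \<in> Pow ({..<length v} \<times> {..<length u})"
  then have W: "W \<subseteq> {..<length v} \<times> {..<length u}" by simp
  have fA: "f i < length V" if "i < length v" for i using f A that by (auto simp: bij_betw_def)
  have gB: "g j < length U" if "j < length u" for j using g B that by (auto simp: bij_betw_def)
  have "(f i, g j) \<in> comp_pairs V U \<longleftrightarrow> (i, j) \<in> comp_pairs v u" if "(i, j) \<in> W" for i j
    using W that by (auto simp: comp_pairs_def fv gu fA gB)
  then have "map_prod f g ` W \<subseteq> comp_pairs V U \<longleftrightarrow> W \<subseteq> comp_pairs v u"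
    by (auto simp: image_subset_iff)
  moreover have "fst ` map_prod f g ` W = A \<longleftrightarrow> fst ` W = {..<length v}"
  proof -
    have "fst ` map_prod f g ` W = f ` fst ` W" by (auto simp: image_image)
    moreover have "fst ` W \<subseteq> {..<length v}" using W by auto
    ultimately show ?thesis
      using f by (metis bij_betw_def inj_on_image_eq_iff order_refl)
  qed
  moreover have "snd ` map_prod f g ` W = B \<longleftrightarrow> snd ` W = {..<length u}"
  proof -
    have "snd ` map_prod f g ` W = g ` snd ` W" by (auto simp: image_image)
    moreover have "snd ` W \<subseteq> {..<length u}" using W by auto
    ultimately show ?thesis
      using g by (metis bij_betw_def inj_on_image_eq_iff order_refl)
  qed
  ultimately show "(map_prod f g ` W \<subseteq> comp_pairs V U \<and> fst ` map_prod f g ` W = A \<and> snd ` map_prod f g ` W = B)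
      \<longleftrightarrow> (W \<subseteq> comp_pairs v u \<and> fst ` W = {..<length v} \<and> snd ` W = {..<length u})"
    by simp
qed

lemma pullback_sum_reindex:
  assumes f: "bij_betw f {..<length v} A" and g: "bij_betw g {..<length u} B"
    and A: "A \<subseteq> {..<length V}" and B: "B \<subseteq> {..<length U}"
    and fv: "\<And>i. i < length v \<Longrightarrow> V ! (f i) = v ! i"
    and gu: "\<And>j. j < length u \<Longrightarrow> U ! (g j) = u ! j"
  shows "pullback_sum v u = (\<Sum>S\<in>pullbacks_onto V U A B. frag_of (image_mset (pullback_edge V U) (mset_set S)))"
proof -
  have "image_mset (pullback_edge v u) (mset_set W) = image_mset (pullback_edge V U) (mset_set (map_prod f g ` W))"
    if "W \<in> pullbacks_onto v u {..<length v} {..<length u}" for W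
  proof -
    have W: "W \<subseteq> {..<length v} \<times> {..<length u}"
      using that by (auto simp: pullbacks_onto_def comp_pairs_def)
    have fin: "finite W" using W finite_subset by blast
    have "inj_on (map_prod f g) W"
      using map_prod_inj_on[of f "{..<length v}" g "{..<length u}"] f g W
      by (auto simp: bij_betw_def intro: inj_on_subset)
    then have "mset_set (map_prod f g ` W) = image_mset (map_prod f g) (mset_set W)"
      by (rule image_mset_mset_set[symmetric])
    moreover have "image_mset (pullback_edge V U \<circ> map_prod f g) (mset_set W) = image_mset (pullback_edge v u) (mset_set W)"
      using W fin by (intro image_mset_cong) (auto simp: pullback_edge_def fv gu)
    ultimately show ?thesis by (simp add: multiset.map_comp)
  qed
  then show ?thesis
    unfolding pullback_sum_def weak_pullbacks_eq
    by (simp add: sum.reindex_bij_betw[OF bij_betw_pullbacks_onto[OF assms], symmetric] cong: sum.cong)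
qed

lemma pullback_sum_perm: "mset v = mset v' \<Longrightarrow> mset u = mset u' \<Longrightarrow> pullback_sum v u = pullback_sum v' u'"
proof -
  assume a: "mset v = mset v'" "mset u = mset u'"
  obtain f where f: "bij_betw f {..<length v} {..<length v'}" "\<forall>i<length v. v!i = v'!(f i)"
    using permutation_Ex_bij[OF a(1)] by blast
  obtain g where g: "bij_betw g {..<length u} {..<length u'}" "\<forall>i<length u. u!i = u'!(g i)"
    using permutation_Ex_bij[OF a(2)] by blast
  have "pullback_sum v u = (\<Sum>S\<in>pullbacks_onto v' u' {..<length v'} {..<length u'}. frag_of (image_mset (pullback_edge v' u') (mset_set S)))"
    by (rule pullback_sum_reindex[OF f(1) g(1)]) (use f g in auto)
  then show ?thesis by (simp add: pullback_sum_def weak_pullbacks_eq)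
qed

definition list_of :: "'c multiset \<Rightarrow> 'c list" where "list_of M = (SOME xs. mset xs = M)"

lemma mset_list_of [simp]: "mset (list_of M) = M"
  unfolding list_of_def by (rule someI_ex) (rule ex_mset)

definition pullback_sum_mset :: "('a \<times> 'a) multiset \<Rightarrow> ('a \<times> 'a) multiset \<Rightarrow> (('a \<times> 'a) multiset \<Rightarrow>\<^sub>0 int)" where
  "pullback_sum_mset M N = pullback_sum (list_of M) (list_of N)"

lemma pullback_sum_eq_mset: "pullback_sum v u = pullback_sum_mset (mset v) (mset u)"
  unfolding pullback_sum_mset_def by (rule pullback_sum_perm) auto

definition sublist_at :: "'c list \<Rightarrow> nat set \<Rightarrow> 'c list" where
  "sublist_at V D = map (nth V) (sorted_list_of_set D)"

definition msub_at :: "'c list \<Rightarrow> nat set \<Rightarrow> 'c multiset" where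
  "msub_at V D = image_mset (nth V) (mset_set D)"

lemma mset_sublist_at: "mset (sublist_at V D) = msub_at V D"
  by (simp add: sublist_at_def msub_at_def mset_map mset_sorted_set)

lemma pullback_sum_sublist_at:
  assumes D: "D \<subseteq> {..<length V}" and E: "E \<subseteq> {..<length U}"
  shows "pullback_sum (sublist_at V D) (sublist_at U E) = (\<Sum>S\<in>pullbacks_onto V U D E. frag_of (image_mset (pullback_edge V U) (mset_set S)))"
proof -
  have fD: "finite D" using D finite_subset by blast
  have fE: "finite E" using E finite_subset by blast
  have bD: "bij_betw (nth (sorted_list_of_set D)) {..<length (sublist_at V D)} D"
    by (rule bij_betw_nth) (auto simp: sublist_at_def fD)
  have bE: "bij_betw (nth (sorted_list_of_set E)) {..<length (sublist_at U E)} E"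
    by (rule bij_betw_nth) (auto simp: sublist_at_def fE)
  show ?thesis
    by (rule pullback_sum_reindex[OF bD bE D E]) (auto simp: sublist_at_def)
qed

lemma image_mset_sum_singletons: "finite S \<Longrightarrow> image_mset r (mset_set S) = (\<Sum>w\<in>S. {#r w#})"
  by (induction S rule: finite_induct) auto

text \<open>Every set of composable pairs is a weak pull-back of exactly one pair of
  sub-correspondences, namely of its two projections.\<close>
lemma sum_pullback_sums_Pow:
  "(\<Sum>D\<in>Pow {..<length V}. \<Sum>E\<in>Pow {..<length U}. pullback_sum (sublist_at V D) (sublist_at U E))
    = (\<Prod>w\<in>comp_pairs V U. 1 + edge_var (pullback_edge V U w))"
proof -
  define h where "h S = frag_of (image_mset (pullback_edge V U) (mset_set S))" for S
  have "(\<Sum>D\<in>Pow {..<length V}. \<Sum>E\<in>Pow {..<length U}. pullback_sum (sublist_at V D) (sublist_at U E))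
      = (\<Sum>D\<in>Pow {..<length V}. \<Sum>E\<in>Pow {..<length U}. \<Sum>S\<in>pullbacks_onto V U D E. h S)"
    unfolding h_def by (intro sum.cong refl pullback_sum_sublist_at) auto
  also have "\<dots> = (\<Sum>(D,E)\<in>Pow {..<length V} \<times> Pow {..<length U}. \<Sum>S\<in>pullbacks_onto V U D E. h S)"
    by (simp add: sum.cartesian_product)
  also have "\<dots> = (\<Sum>y\<in>Pow {..<length V} \<times> Pow {..<length U}.
         sum h {S \<in> Pow (comp_pairs V U). (fst ` S, snd ` S) = y})"
    by (intro sum.cong refl) (auto simp: pullbacks_onto_def)
  also have "\<dots> = sum h (Pow (comp_pairs V U))"
    by (rule sum.group) (use finite_comp_pairs[unfolded comp_pairs_def] in \<open>auto simp: comp_pairs_def\<close>)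
  also have "\<dots> = (\<Sum>S\<in>Pow (comp_pairs V U). prod (\<lambda>w. edge_var (pullback_edge V U w)) S * prod (\<lambda>w. 1) (comp_pairs V U - S))"
  proof (intro sum.cong refl)
    fix S assume "S \<in> Pow (comp_pairs V U)"
    then have "finite S" using finite_comp_pairs finite_subset by blast
    then show "h S = prod (\<lambda>w. edge_var (pullback_edge V U w)) S * prod (\<lambda>w. 1) (comp_pairs V U - S)"
      by (simp add: h_def image_mset_sum_singletons frag_of_sum edge_var_def)
  qed
  also have "\<dots> = (\<Prod>w\<in>comp_pairs V U. edge_var (pullback_edge V U w) + 1)"
    by (rule prod_add[symmetric]) (rule finite_comp_pairs)
  finally show ?thesis by (simp add: add.commute)
qed

definition vecs_le :: "nat list \<Rightarrow> nat list set" where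
  "vecs_le d = {d'. length d' = length d \<and> (\<forall>i<length d. d'!i \<le> d!i)}"

lemma vecs_le_Nil: "vecs_le [] = {[]}" by (auto simp: vecs_le_def)

lemma vecs_le_Cons: "vecs_le (t # d) = (\<lambda>(k,d'). k # d') ` ({..t} \<times> vecs_le d)"
proof -
  have "x \<in> vecs_le (t # d) \<longleftrightarrow> x \<in> (\<lambda>(k,d'). k # d') ` ({..t} \<times> vecs_le d)" for x
  proof (cases x)
    case Nil then show ?thesis by (auto simp: vecs_le_def)
  next
    case (Cons k d')
    then show ?thesis by (auto simp: vecs_le_def image_iff nth_Cons split: nat.splits)
  qed
  then show ?thesis by blast
qed

lemma finite_vecs_le: "finite (vecs_le d)"
  by (induction d) (auto simp: vecs_le_Nil vecs_le_Cons)

definition I_corr :: "'a maze \<Rightarrow> nat list \<Rightarrow> 'a corr" where "I_corr P d = maze_corr (maze_I P d)"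

lemma I_corr_Cons: "I_corr (p # P) (t # d) = replicate t (passage_edge p) @ I_corr P d"
  by (simp add: I_corr_def maze_corr_def maze_I_def passage_edge_def psrc_def ptgt_def)

lemma I_corr_Nil: "I_corr [] [] = []" by (simp add: I_corr_def maze_corr_def maze_I_def)

lemma sum_Pow_lessThan_add:
  fixes t m :: nat
  shows "(\<Sum>D\<in>Pow {..<t+m}. F D) = (\<Sum>D1\<in>Pow {..<t}. \<Sum>D2\<in>Pow {..<m}. F (D1 \<union> (\<lambda>x. x + t) ` D2))"
proof -
  have low: "(D1 \<union> (\<lambda>x. x + t) ` D2) \<inter> {..<t} = D1" if "D1 \<subseteq> {..<t}" for D1 D2
    using that by auto
  have high: "(\<lambda>x. x - t) ` ((D1 \<union> (\<lambda>x. x + t) ` D2) - {..<t}) = D2" if "D1 \<subseteq> {..<t}" for D1 D2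
  proof -
    have "(D1 \<union> (\<lambda>x. x + t) ` D2) - {..<t} = (\<lambda>x. x + t) ` D2" using that by auto
    then show ?thesis by (simp add: image_image)
  qed
  have shift: "(\<lambda>x. x + t) ` (\<lambda>x. x - t) ` (D - {..<t}) = D - {..<t}" for D
    by (auto simp: image_image image_iff)
  have "(\<Sum>D1\<in>Pow {..<t}. \<Sum>D2\<in>Pow {..<m}. F (D1 \<union> (\<lambda>x. x + t) ` D2))
      = (\<Sum>(D1,D2)\<in>Pow {..<t} \<times> Pow {..<m}. F (D1 \<union> (\<lambda>x. x + t) ` D2))"
    by (simp add: sum.cartesian_product)
  also have "\<dots> = (\<Sum>D\<in>Pow {..<t+m}. F D)"
    by (rule sum.reindex_bij_witness[where i="\<lambda>D. (D \<inter> {..<t}, (\<lambda>x. x - t) ` (D - {..<t}))"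
        and j="\<lambda>(D1,D2). D1 \<union> (\<lambda>x. x + t) ` D2"]) (auto simp: low high shift)
  finally show ?thesis ..
qed

lemma msub_at_replicate_append:
  fixes t :: nat
  assumes D1: "D1 \<subseteq> {..<t}" and D2: "D2 \<subseteq> {..<length ys}"
  shows "msub_at (replicate t a @ ys) (D1 \<union> (\<lambda>x. x + t) ` D2) = replicate_mset (card D1) a + msub_at ys D2"
proof -
  have f1: "finite D1" using D1 finite_subset by blast
  have f2: "finite D2" using D2 finite_subset by blast
  have "mset_set (D1 \<union> (\<lambda>x. x + t) ` D2) = mset_set D1 + mset_set ((\<lambda>x. x + t) ` D2)"
    by (rule mset_set_Union) (use f1 f2 D1 in auto)
  also have "mset_set ((\<lambda>x. x + t) ` D2) = image_mset (\<lambda>x. x + t) (mset_set D2)"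
    by (rule image_mset_mset_set[symmetric]) (auto simp: inj_on_def)
  finally have e: "mset_set (D1 \<union> (\<lambda>x. x + t) ` D2) = mset_set D1 + image_mset (\<lambda>x. x + t) (mset_set D2)" .
  have a1: "image_mset (nth (replicate t a @ ys)) (mset_set D1) = replicate_mset (card D1) a"
  proof -
    have "image_mset (nth (replicate t a @ ys)) (mset_set D1) = image_mset (\<lambda>_. a) (mset_set D1)"
      by (rule image_mset_cong) (use D1 f1 in \<open>auto simp: nth_append\<close>)
    then show ?thesis by (simp add: image_mset_const_eq)
  qed
  have a2: "image_mset (nth (replicate t a @ ys)) (image_mset (\<lambda>x. x + t) (mset_set D2)) = image_mset (nth ys) (mset_set D2)"
    unfolding multiset.map_comp
    by (rule image_mset_cong) (use D2 f2 in \<open>auto simp: nth_append\<close>)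
  show ?thesis unfolding msub_at_def e image_mset_union a1 a2 ..
qed

lemma sum_Pow_card:
  fixes g :: "nat \<Rightarrow> 'r::comm_semiring_1"
  shows "(\<Sum>D\<in>Pow {..<t}. g (card D)) = (\<Sum>k\<le>t. of_nat (t choose k) * g k)"
proof -
  have "(\<Sum>D\<in>Pow {..<t}. g (card D)) = (\<Sum>k\<in>{..t}. \<Sum>D\<in>{D \<in> Pow {..<t}. card D = k}. g (card D))"
    by (rule sum.group[symmetric]) (auto simp: card_mono[of "{..<t}", simplified])
  also have "\<dots> = (\<Sum>k\<in>{..t}. of_nat (t choose k) * g k)"
  proof (intro sum.cong refl)
    fix k
    have "{D \<in> Pow {..<t}. card D = k} = {B. B \<subseteq> {..<t} \<and> card B = k}" by auto
    have c: "card {D. D \<subseteq> {..<t} \<and> card D = k} = t choose k" using n_subsets[of "{..<t}" k] by simp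
    have "(\<Sum>D\<in>{D \<in> Pow {..<t}. card D = k}. g (card D)) = (\<Sum>D\<in>{D \<in> Pow {..<t}. card D = k}. g k)"
      by (rule sum.cong) auto
    then show "(\<Sum>D\<in>{D \<in> Pow {..<t}. card D = k}. g (card D)) = of_nat (t choose k) * g k"
      by (simp add: c)
  qed
  finally show ?thesis .
qed

definition binom_vec :: "nat list \<Rightarrow> nat list \<Rightarrow> nat" where
  "binom_vec d d' = (\<Prod>i<length d. d!i choose d'!i)"

lemma binom_vec_Cons: "binom_vec (t # d) (k # d') = (t choose k) * binom_vec d d'"
  by (simp add: binom_vec_def prod.lessThan_Suc_shift del: prod.lessThan_Suc)

lemma sum_Pow_msub_at_I_corr:
  fixes h :: "('a \<times> 'a) multiset \<Rightarrow> 'r::comm_semiring_1"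
  assumes "length d = length P"
  shows "(\<Sum>D\<in>Pow {..<length (I_corr P d)}. h (msub_at (I_corr P d) D))
        = (\<Sum>d'\<in>vecs_le d. of_nat (binom_vec d d') * h (mset (I_corr P d')))"
  using assms
proof (induction P arbitrary: d h)
  case Nil
  then show ?case by (simp add: I_corr_Nil vecs_le_Nil msub_at_def binom_vec_def)
next
  case (Cons p P)
  then obtain t d0 where d: "d = t # d0" "length d0 = length P" by (cases d) auto
  let ?V0 = "I_corr P d0"
  have "(\<Sum>D\<in>Pow {..<length (I_corr (p # P) d)}. h (msub_at (I_corr (p # P) d) D))
      = (\<Sum>D1\<in>Pow {..<t}. \<Sum>D2\<in>Pow {..<length ?V0}. h (msub_at (replicate t (passage_edge p) @ ?V0) (D1 \<union> (\<lambda>x. x + t) ` D2)))"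
    unfolding d I_corr_Cons by (simp add: sum_Pow_lessThan_add)
  also have "\<dots> = (\<Sum>D1\<in>Pow {..<t}. \<Sum>D2\<in>Pow {..<length ?V0}. h (replicate_mset (card D1) (passage_edge p) + msub_at ?V0 D2))"
    by (intro sum.cong refl) (simp add: msub_at_replicate_append)
  also have "\<dots> = (\<Sum>D1\<in>Pow {..<t}. \<Sum>d'\<in>vecs_le d0. of_nat (binom_vec d0 d') * h (replicate_mset (card D1) (passage_edge p) + mset (I_corr P d')))"
    by (intro sum.cong refl Cons.IH[OF d(2)])
  also have "\<dots> = (\<Sum>k\<le>t. of_nat (t choose k) * (\<Sum>d'\<in>vecs_le d0. of_nat (binom_vec d0 d') * h (replicate_mset k (passage_edge p) + mset (I_corr P d'))))"
    by (rule sum_Pow_card)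
  also have "\<dots> = (\<Sum>(k,d')\<in>{..t} \<times> vecs_le d0. of_nat (binom_vec (t # d0) (k # d')) * h (mset (I_corr (p # P) (k # d'))))"
    by (simp add: sum.cartesian_product[symmetric] sum_distrib_left binom_vec_Cons I_corr_Cons mult.assoc)
  also have "\<dots> = (\<Sum>d'\<in>vecs_le d. of_nat (binom_vec d d') * h (mset (I_corr (p # P) d')))"
    unfolding d vecs_le_Cons
    by (subst sum.reindex) (auto simp: inj_on_def case_prod_beta)
  finally show ?case .
qed

definition edge_factor :: "'a \<times> 'a \<Rightarrow> 'a \<times> 'a \<Rightarrow> (('a \<times> 'a) multiset \<Rightarrow>\<^sub>0 int)" where
  "edge_factor v u = (if fst v = snd u then 1 + edge_var (fst u, snd v) else 1)"

lemma prod_nth_eq_prod_mset: "(\<Prod>i<length xs. f (xs ! i)) = prod_mset (image_mset f (mset xs))"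
  for f :: "'c \<Rightarrow> 'r::comm_monoid_mult"
proof (induction xs)
  case Nil then show ?case by simp
next
  case (Cons x xs)
  then show ?case by (simp only: length_Cons prod.lessThan_Suc_shift) simp
qed

lemma prod_mset_image_sum: "prod_mset (image_mset f (\<Sum>i\<in>I. M i)) = (\<Prod>i\<in>I. prod_mset (image_mset f (M i)))"
  for f :: "'c \<Rightarrow> 'r::comm_monoid_mult"
  by (induction I rule: infinite_finite_induct) auto

lemma prod_I_corr:
  fixes f :: "'a \<times> 'a \<Rightarrow> 'r::comm_monoid_mult"
  assumes "length d = length P"
  shows "(\<Prod>i<length (I_corr P d). f (I_corr P d ! i)) = (\<Prod>i<length P. f (passage_edge (P!i)) ^ (d!i))"
  unfolding prod_nth_eq_prod_mset I_corr_def mset_maze_corr_maze_I[OF assms] prod_mset_image_sum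
  by (simp add: image_replicate_mset)

lemma prod_comp_pairs:
  "(\<Prod>w\<in>comp_pairs V U. 1 + edge_var (pullback_edge V U w)) = (\<Prod>i<length V. \<Prod>j<length U. edge_factor (V!i) (U!j))"
proof -
  have "(\<Prod>w\<in>comp_pairs V U. 1 + edge_var (pullback_edge V U w)) = (\<Prod>w\<in>{..<length V} \<times> {..<length U}. edge_factor (V!fst w) (U!snd w))"
    by (rule prod.mono_neutral_cong_left) (auto simp: comp_pairs_def edge_factor_def pullback_edge_def)
  then show ?thesis by (simp add: prod.cartesian_product case_prod_beta)
qed

lemma prod_comp_pairs_I_corr:
  assumes "length d = length P" "length e = length Q"
  shows "(\<Prod>w\<in>comp_pairs (I_corr P d) (I_corr Q e). 1 + edge_var (pullback_edge (I_corr P d) (I_corr Q e) w))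
      = (\<Prod>i<length P. \<Prod>j<length Q. edge_factor (passage_edge (P!i)) (passage_edge (Q!j)) ^ (d!i * e!j))"
proof -
  have "(\<Prod>w\<in>comp_pairs (I_corr P d) (I_corr Q e). 1 + edge_var (pullback_edge (I_corr P d) (I_corr Q e) w))
      = (\<Prod>i<length (I_corr P d). (\<lambda>v. \<Prod>j<length (I_corr Q e). edge_factor v (I_corr Q e ! j)) (I_corr P d ! i))"
    by (simp add: prod_comp_pairs)
  also have "\<dots> = (\<Prod>i<length P. (\<Prod>j<length (I_corr Q e). edge_factor (passage_edge (P!i)) (I_corr Q e ! j)) ^ (d!i))"
    by (rule prod_I_corr[OF assms(1)])
  also have "\<dots> = (\<Prod>i<length P. (\<Prod>j<length Q. edge_factor (passage_edge (P!i)) (passage_edge (Q!j)) ^ (e!j)) ^ (d!i))"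
    by (simp add: prod_I_corr[OF assms(2)])
  also have "\<dots> = (\<Prod>i<length P. \<Prod>j<length Q. edge_factor (passage_edge (P!i)) (passage_edge (Q!j)) ^ (d!i * e!j))"
    by (simp add: prod_power_distrib power_mult[symmetric] mult.commute)
  finally show ?thesis .
qed

lemma pullback_sums_binomial:
  assumes dl: "length d = length P" and el: "length e = length Q"
  shows "(\<Sum>d'\<in>vecs_le d. \<Sum>e'\<in>vecs_le e. of_nat (binom_vec d d') * of_nat (binom_vec e e') * pullback_sum (I_corr P d') (I_corr Q e'))
      = (\<Prod>i<length P. \<Prod>j<length Q. edge_factor (passage_edge (P!i)) (passage_edge (Q!j)) ^ (d!i * e!j))"
proof -
  let ?V = "I_corr P d" and ?U = "I_corr Q e"
  have "(\<Prod>i<length P. \<Prod>j<length Q. edge_factor (passage_edge (P!i)) (passage_edge (Q!j)) ^ (d!i * e!j))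
      = (\<Sum>D\<in>Pow {..<length ?V}. \<Sum>E\<in>Pow {..<length ?U}. pullback_sum (sublist_at ?V D) (sublist_at ?U E))"
    by (simp add: sum_pullback_sums_Pow prod_comp_pairs_I_corr[OF dl el])
  also have "\<dots> = (\<Sum>D\<in>Pow {..<length ?V}. (\<lambda>M. \<Sum>E\<in>Pow {..<length ?U}. pullback_sum_mset M (msub_at ?U E)) (msub_at ?V D))"
    by (simp add: pullback_sum_eq_mset mset_sublist_at)
  also have "\<dots> = (\<Sum>d'\<in>vecs_le d. of_nat (binom_vec d d') * (\<Sum>E\<in>Pow {..<length ?U}. pullback_sum_mset (mset (I_corr P d')) (msub_at ?U E)))"
    by (rule sum_Pow_msub_at_I_corr[OF dl])
  also have "\<dots> = (\<Sum>d'\<in>vecs_le d. of_nat (binom_vec d d') * (\<Sum>e'\<in>vecs_le e. of_nat (binom_vec e e') * pullback_sum_mset (mset (I_corr P d')) (mset (I_corr Q e'))))"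
    by (intro sum.cong refl arg_cong[where f="\<lambda>x. _ * x"] sum_Pow_msub_at_I_corr[OF el])
  also have "\<dots> = (\<Sum>d'\<in>vecs_le d. \<Sum>e'\<in>vecs_le e. of_nat (binom_vec d d') * of_nat (binom_vec e e') * pullback_sum (I_corr P d') (I_corr Q e'))"
    by (simp add: sum_distrib_left pullback_sum_eq_mset mult.assoc)
  finally show ?thesis ..
qed

section \<open>Inverting binomial transforms\<close>

lemma prod_one_plus_power_expand:
  fixes M :: "nat \<Rightarrow> 'r::comm_semiring_1"
  shows "(\<Prod>i<length d. (1 + M i) ^ (d!i)) = (\<Sum>d'\<in>vecs_le d. of_nat (binom_vec d d') * (\<Prod>i<length d. M i ^ (d'!i)))"
proof (induction d arbitrary: M)
  case Nil then show ?case by (simp add: vecs_le_Nil binom_vec_def)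
next
  case (Cons t d)
  have "(\<Prod>i<length (t # d). (1 + M i) ^ ((t # d)!i)) = (1 + M 0) ^ t * (\<Prod>i<length d. (1 + M (Suc i)) ^ (d!i))"
    by (simp only: length_Cons prod.lessThan_Suc_shift) simp
  also have "\<dots> = (\<Sum>k\<le>t. of_nat (t choose k) * M 0 ^ k) * (\<Sum>d'\<in>vecs_le d. of_nat (binom_vec d d') * (\<Prod>i<length d. M (Suc i) ^ (d'!i)))"
    using Cons.IH[of "\<lambda>i. M (Suc i)"] binomial_ring[of "M 0" 1 t] by (simp add: add.commute mult.commute)
  also have "\<dots> = (\<Sum>(k,d')\<in>{..t} \<times> vecs_le d. of_nat (binom_vec (t # d) (k # d')) * (\<Prod>i<length (t # d). M i ^ ((k # d')!i)))"
    by (simp only: length_Cons prod.lessThan_Suc_shift sum_product sum.cartesian_product binom_vec_Cons)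
       (simp add: case_prod_beta algebra_simps)
  also have "\<dots> = (\<Sum>d'\<in>vecs_le (t # d). of_nat (binom_vec (t # d) d') * (\<Prod>i<length (t # d). M i ^ (d'!i)))"
    unfolding vecs_le_Cons by (subst sum.reindex) (auto simp: inj_on_def case_prod_beta)
  finally show ?case .
qed

lemma vecs_le_refl: "d \<in> vecs_le d" by (simp add: vecs_le_def)

lemma binom_vec_refl: "binom_vec d d = 1" by (simp add: binom_vec_def)

lemma vecs_le_sum_list_less: "d' \<in> vecs_le d \<Longrightarrow> d' \<noteq> d \<Longrightarrow> sum_list d' < sum_list d"
proof -
  assume a: "d' \<in> vecs_le d" "d' \<noteq> d"
  then have l: "length d' = length d" and le: "\<forall>i<length d. d'!i \<le> d!i" by (auto simp: vecs_le_def)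
  have "\<exists>k<length d. d'!k \<noteq> d!k"
  proof (rule ccontr)
    assume "\<not> (\<exists>k<length d. d'!k \<noteq> d!k)"
    then have "d' = d" using l by (simp add: nth_equalityI)
    then show False using a(2) by simp
  qed
  then obtain k where k: "k < length d" "d'!k \<noteq> d!k" by blast
  have "sum_list d' = (\<Sum>i<length d. d'!i)" using l by (simp add: sum_list_sum_nth atLeast0LessThan)
  also have "\<dots> < (\<Sum>i<length d. d!i)"
    using le k by (intro sum_strict_mono_ex1) (auto intro!: bexI[of _ k] simp: le_neq_implies_less)
  also have "\<dots> = sum_list d" by (simp add: sum_list_sum_nth atLeast0LessThan)
  finally show ?thesis .
qed

lemma length_vecs_le: "d' \<in> vecs_le d \<Longrightarrow> length d' = length d" by (simp add: vecs_le_def)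

lemma vecs_le_inversion:
  fixes X :: "nat list \<Rightarrow> 'r::comm_ring_1"
  assumes S0: "0 \<in> S" and Sd: "\<And>x y. x \<in> S \<Longrightarrow> y \<in> S \<Longrightarrow> x - y \<in> S"
    and Sm: "\<And>c x. x \<in> S \<Longrightarrow> c * x \<in> S"
    and Z: "\<And>e. length e = p \<Longrightarrow> (\<Sum>e'\<in>vecs_le e. of_nat (binom_vec e e') * X e') \<in> S"
  shows "length e = p \<Longrightarrow> X e \<in> S"
proof (induction "sum_list e" arbitrary: e rule: less_induct)
  case less
  have Sa: "x \<in> S \<Longrightarrow> y \<in> S \<Longrightarrow> x + y \<in> S" for x y
    using Sd[of 0 y] Sd[of x "0 - y"] S0 by simp
  have Ss: "(\<And>i. i \<in> I \<Longrightarrow> f i \<in> S) \<Longrightarrow> sum f I \<in> S" for f and I :: "nat list set"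
    by (induction I rule: infinite_finite_induct) (auto simp: S0 Sa)
  have "(\<Sum>e'\<in>vecs_le e. of_nat (binom_vec e e') * X e') = X e + (\<Sum>e'\<in>vecs_le e - {e}. of_nat (binom_vec e e') * X e')"
    by (subst sum.remove[OF finite_vecs_le vecs_le_refl]) (simp add: binom_vec_refl)
  then have "X e = (\<Sum>e'\<in>vecs_le e. of_nat (binom_vec e e') * X e') - (\<Sum>e'\<in>vecs_le e - {e}. of_nat (binom_vec e e') * X e')"
    by simp
  moreover have "(\<Sum>e'\<in>vecs_le e - {e}. of_nat (binom_vec e e') * X e') \<in> S"
    by (intro Ss Sm less.hyps) (auto dest: vecs_le_sum_list_less simp: length_vecs_le less.prems)
  ultimately show ?case using Z[OF less.prems] Sd by simp
qed

lemma vecs_le_inversion_prod: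
  fixes G :: "nat list \<Rightarrow> 'r::comm_ring_1"
  assumes "0 \<in> S" "\<And>x y. x \<in> S \<Longrightarrow> y \<in> S \<Longrightarrow> x - y \<in> S" "\<And>c x. x \<in> S \<Longrightarrow> c * x \<in> S"
    and binomial: "\<And>d. length d = m \<Longrightarrow>
      (\<Sum>d'\<in>vecs_le d. of_nat (binom_vec d d') * G d') - (\<Prod>i<m. (1 + M i) ^ (d!i)) \<in> S"
    and "length d = m"
  shows "G d - (\<Prod>i<m. M i ^ (d!i)) \<in> S"
proof (rule vecs_le_inversion[of S m "\<lambda>d. G d - (\<Prod>i<m. M i ^ (d!i))"])
  fix d :: "nat list" assume d: "length d = m"
  have "(\<Sum>d'\<in>vecs_le d. of_nat (binom_vec d d') * (\<Prod>i<m. M i ^ (d'!i))) = (\<Prod>i<m. (1 + M i) ^ (d!i))"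
    using prod_one_plus_power_expand[of M d] d by simp
  then show "(\<Sum>d'\<in>vecs_le d. of_nat (binom_vec d d') * (G d' - (\<Prod>i<m. M i ^ (d'!i)))) \<in> S"
    using binomial[OF d] by (simp add: right_diff_distrib sum_subtractf)
qed (use assms in auto)

lemma vecs_le_inversion_prod_eq:
  fixes G :: "nat list \<Rightarrow> 'r::comm_ring_1"
  assumes "\<And>d. length d = m \<Longrightarrow>
      (\<Sum>d'\<in>vecs_le d. of_nat (binom_vec d d') * G d') = (\<Prod>i<m. (1 + M i) ^ (d!i))"
    and "length d = m"
  shows "G d = (\<Prod>i<m. M i ^ (d!i))"
  using vecs_le_inversion_prod[of "{0}" m G M d] assms by simp

lemma vecs_le_inversion_prod_trunc_eq:
  assumes "\<And>d. length d = m \<Longrightarrow>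
      trunc_eq n (\<Sum>d'\<in>vecs_le d. of_nat (binom_vec d d') * G d') (\<Prod>i<m. (1 + M i) ^ (d!i))"
    and "length d = m"
  shows "trunc_eq n (G d) (\<Prod>i<m. M i ^ (d!i))"
  using vecs_le_inversion_prod[of "deg_gt n" m G M d] assms
  by (auto simp: trunc_eq_def deg_gt_def intro: deg_ge_diff deg_ge_mult_left)

lemma one_plus_prod_deg_ge_1: "finite I \<Longrightarrow> (\<And>i. i \<in> I \<Longrightarrow> M i \<in> deg_ge 1) \<Longrightarrow> (\<Prod>i\<in>I. 1 + M i) - 1 \<in> deg_ge 1"
proof (induction I rule: finite_induct)
  case empty then show ?case by simp
next
  case (insert x I)
  have "(\<Prod>i\<in>insert x I. 1 + M i) - 1 = (1 + M x) * (1 + ((\<Prod>i\<in>I. 1 + M i) - 1)) - 1"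
    using insert by simp
  then show ?case using one_plus_mult_deg_ge_1[of "M x" "(\<Prod>i\<in>I. 1 + M i) - 1"] insert by simp
qed

lemma one_plus_power_deg_ge_1: "N \<in> deg_ge 1 \<Longrightarrow> (1 + N) ^ k - 1 \<in> deg_ge 1"
  using one_plus_prod_deg_ge_1[of "{..<k}" "\<lambda>_. N"] by simp

lemma trunc_pow_prod_base:
  assumes "finite I" "\<And>i. i \<in> I \<Longrightarrow> M i \<in> deg_ge 1"
  shows "trunc_eq n (trunc_pow n a ((\<Prod>i\<in>I. 1 + M i) - 1)) (\<Prod>i\<in>I. trunc_pow n a (M i))"
  using assms
proof (induction I rule: finite_induct)
  case empty then show ?case by simp
next
  case (insert x I)
  have e: "(\<Prod>i\<in>insert x I. 1 + M i) - 1 = (1 + M x) * (1 + ((\<Prod>i\<in>I. 1 + M i) - 1)) - 1"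
    using insert by simp
  have "trunc_eq n (trunc_pow n a ((\<Prod>i\<in>insert x I. 1 + M i) - 1))
      (trunc_pow n a (M x) * trunc_pow n a ((\<Prod>i\<in>I. 1 + M i) - 1))"
    unfolding e by (rule trunc_pow_mult_base) (use insert one_plus_prod_deg_ge_1 in auto)
  also have "trunc_eq n \<dots> (trunc_pow n a (M x) * (\<Prod>i\<in>I. trunc_pow n a (M i)))"
    using insert by (intro trunc_eq_mult trunc_eq_refl) auto
  finally show ?case using insert by simp
qed

lemma trunc_pow_power_base:
  assumes "M \<in> deg_ge 1"
  shows "trunc_eq n (trunc_pow n a ((1 + M) ^ k - 1)) (trunc_pow n a M ^ k)"
  using trunc_pow_prod_base[of "{..<k}" "\<lambda>_. M" n a] assms by simp

definition binom_coeff :: "(nat \<Rightarrow> int) \<Rightarrow> nat list \<Rightarrow> int" where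
  "binom_coeff a d = (\<Prod>i<length d. int_binom (a i) (d!i))"

lemma length_vecs: "d \<in> vecs S m \<Longrightarrow> length d = m" by (simp add: vecs_def)

lemma sum_vecs_binom_coeff_prod:
  "(\<Sum>d\<in>vecs {..n} m. of_int (binom_coeff a d) * (\<Prod>i<m. M i ^ (d!i))) = (\<Prod>i<m. trunc_pow n (a i) (M i))"
proof -
  have "(\<Sum>d\<in>vecs {..n} m. of_int (binom_coeff a d) * (\<Prod>i<m. M i ^ (d!i)))
      = (\<Sum>d\<in>vecs {..n} m. \<Prod>i<m. of_int (int_binom (a i) (d!i)) * M i ^ (d!i))"
    by (intro sum.cong refl) (simp add: binom_coeff_def prod.distrib length_vecs)
  also have "\<dots> = (\<Prod>i<m. \<Sum>t\<in>{..n}. of_int (int_binom (a i) t) * M i ^ t)"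
    by (rule sum_vecs_prod) simp
  also have "\<dots> = (\<Prod>i<m. trunc_pow n (a i) (M i))"
    by (simp add: trunc_pow_def)
  finally show ?thesis .
qed

text \<open>The pull-back sums of the pure mazes I_d, I_e, weighted by the binomial coefficients of the
  labels, add up modulo degree > n to the product over all passage pairs of the truncated powers
  (1 + X_(i,j))^(a_i b_j). For natural labels this is a Vandermonde-type count
  (pullback_sums_binomial); integer labels are reached by inverting the binomial transform, once
  exactly in d and once modulo degree > n in e.\<close>

definition pullback_sum_I :: "'a maze \<Rightarrow> 'a maze \<Rightarrow> nat list \<Rightarrow> nat list \<Rightarrow> (('a \<times> 'a) multiset \<Rightarrow>\<^sub>0 int)" where
  "pullback_sum_I P Q d e = pullback_sum (I_corr P d) (I_corr Q e)"

definition pair_var :: "'a maze \<Rightarrow> 'a maze \<Rightarrow> nat \<Rightarrow> nat \<Rightarrow> (('a \<times> 'a) multiset \<Rightarrow>\<^sub>0 int)" where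
  "pair_var P Q i j = edge_factor (passage_edge (P!i)) (passage_edge (Q!j)) - 1"

lemma pair_var_deg_ge_1: "pair_var P Q i j \<in> deg_ge 1"
  unfolding pair_var_def edge_factor_def by (simp add: edge_var_def deg_ge_def)

lemma pair_var_noncomposable: "psrc (P!i) \<noteq> ptgt (Q!j) \<Longrightarrow> pair_var P Q i j = 0"
  by (simp add: pair_var_def edge_factor_def passage_edge_def)

lemma pullback_sums_inner:
  assumes d: "length d = length P" and e: "length e = length Q"
  shows "(\<Sum>e'\<in>vecs_le e. of_nat (binom_vec e e') * pullback_sum_I P Q d e')
    = (\<Prod>i<length P. ((\<Prod>j<length Q. (1 + pair_var P Q i j) ^ (e!j)) - 1) ^ (d!i))"
proof (rule vecs_le_inversion_prod_eq[OF _ d])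
  fix d :: "nat list" assume d: "length d = length P"
  have "(\<Sum>d'\<in>vecs_le d. of_nat (binom_vec d d') * (\<Sum>e'\<in>vecs_le e. of_nat (binom_vec e e') * pullback_sum_I P Q d' e'))
      = (\<Sum>d'\<in>vecs_le d. \<Sum>e'\<in>vecs_le e. of_nat (binom_vec d d') * of_nat (binom_vec e e') * pullback_sum (I_corr P d') (I_corr Q e'))"
    by (simp add: pullback_sum_I_def sum_distrib_left mult.assoc)
  also have "\<dots> = (\<Prod>i<length P. \<Prod>j<length Q. (1 + pair_var P Q i j) ^ (d!i * e!j))"
    by (simp add: pullback_sums_binomial[OF d e] pair_var_def)
  also have "\<dots> = (\<Prod>i<length P. (1 + ((\<Prod>j<length Q. (1 + pair_var P Q i j) ^ (e!j)) - 1)) ^ (d!i))"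
    by (simp add: prod_power_distrib power_mult mult.commute[of "d!_"])
  finally show "(\<Sum>d'\<in>vecs_le d. of_nat (binom_vec d d') * (\<Sum>e'\<in>vecs_le e. of_nat (binom_vec e e') * pullback_sum_I P Q d' e'))
      = (\<Prod>i<length P. (1 + ((\<Prod>j<length Q. (1 + pair_var P Q i j) ^ (e!j)) - 1)) ^ (d!i))" .
qed

lemma pullback_sums_partial:
  assumes e: "length e = length Q"
  shows "trunc_eq n (\<Sum>d\<in>vecs {..n} (length P). of_int (binom_coeff a d) * pullback_sum_I P Q d e)
    (\<Prod>j<length Q. ((\<Prod>i<length P. trunc_pow n (a i) (pair_var P Q i j)) - 1) ^ (e!j))"
proof (rule vecs_le_inversion_prod_trunc_eq[OF _ e])
  fix e :: "nat list" assume e: "length e = length Q"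
  define Y where "Y i = (\<Prod>j<length Q. (1 + pair_var P Q i j) ^ (e!j)) - 1" for i
  have "(\<Sum>e'\<in>vecs_le e. of_nat (binom_vec e e') * (\<Sum>d\<in>vecs {..n} (length P). of_int (binom_coeff a d) * pullback_sum_I P Q d e'))
      = (\<Sum>d\<in>vecs {..n} (length P). of_int (binom_coeff a d) * (\<Sum>e'\<in>vecs_le e. of_nat (binom_vec e e') * pullback_sum_I P Q d e'))"
    by (simp add: sum_distrib_left mult.left_commute sum.swap[of _ "vecs_le e"])
  also have "\<dots> = (\<Sum>d\<in>vecs {..n} (length P). of_int (binom_coeff a d) * (\<Prod>i<length P. Y i ^ (d!i)))"
    by (intro sum.cong refl) (simp add: pullback_sums_inner length_vecs e Y_def)
  also have "\<dots> = (\<Prod>i<length P. trunc_pow n (a i) (Y i))"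
    by (rule sum_vecs_binom_coeff_prod)
  also have "trunc_eq n \<dots> (\<Prod>i<length P. \<Prod>j<length Q. trunc_pow n (a i) (pair_var P Q i j) ^ (e!j))"
  proof (intro trunc_eq_prod)
    fix i
    have "Y i = (\<Prod>j<length Q. 1 + ((1 + pair_var P Q i j) ^ (e!j) - 1)) - 1" by (simp add: Y_def)
    then have "trunc_eq n (trunc_pow n (a i) (Y i))
        (\<Prod>j<length Q. trunc_pow n (a i) ((1 + pair_var P Q i j) ^ (e!j) - 1))"
      by (simp only: trunc_pow_prod_base one_plus_power_deg_ge_1 pair_var_deg_ge_1 finite_lessThan)
    also have "trunc_eq n \<dots> (\<Prod>j<length Q. trunc_pow n (a i) (pair_var P Q i j) ^ (e!j))"
      by (intro trunc_eq_prod trunc_pow_power_base pair_var_deg_ge_1)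
    finally show "trunc_eq n (trunc_pow n (a i) (Y i)) (\<Prod>j<length Q. trunc_pow n (a i) (pair_var P Q i j) ^ (e!j))" .
  qed
  also have "\<dots> = (\<Prod>j<length Q. (1 + ((\<Prod>i<length P. trunc_pow n (a i) (pair_var P Q i j)) - 1)) ^ (e!j))"
    by (simp add: prod_power_distrib prod.swap[of _ "{..<length P}"])
  finally show "trunc_eq n (\<Sum>e'\<in>vecs_le e. of_nat (binom_vec e e') * (\<Sum>d\<in>vecs {..n} (length P). of_int (binom_coeff a d) * pullback_sum_I P Q d e'))
      (\<Prod>j<length Q. (1 + ((\<Prod>i<length P. trunc_pow n (a i) (pair_var P Q i j)) - 1)) ^ (e!j))" .
qed

lemma pullback_sums_int_labels:
  "trunc_eq n (\<Sum>d\<in>vecs {..n} (length P). \<Sum>e\<in>vecs {..n} (length Q).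
        of_int (binom_coeff a d * binom_coeff b e) * pullback_sum_I P Q d e)
     (\<Prod>i<length P. \<Prod>j<length Q. trunc_pow n (a i * b j) (pair_var P Q i j))"
proof -
  define Z where "Z j = (\<Prod>i<length P. trunc_pow n (a i) (pair_var P Q i j)) - 1" for j
  have "(\<Sum>d\<in>vecs {..n} (length P). \<Sum>e\<in>vecs {..n} (length Q).
        of_int (binom_coeff a d * binom_coeff b e) * pullback_sum_I P Q d e)
      = (\<Sum>e\<in>vecs {..n} (length Q). of_int (binom_coeff b e) *
          (\<Sum>d\<in>vecs {..n} (length P). of_int (binom_coeff a d) * pullback_sum_I P Q d e))"
    by (simp add: sum_distrib_left mult.assoc mult.left_commute[of "of_int (binom_coeff b _)"]
        sum.swap[of _ "vecs {..n} (length P)"])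
  also have "trunc_eq n \<dots> (\<Sum>e\<in>vecs {..n} (length Q). of_int (binom_coeff b e) * (\<Prod>j<length Q. Z j ^ (e!j)))"
    unfolding Z_def by (intro trunc_eq_sum trunc_eq_mult trunc_eq_refl pullback_sums_partial) (simp add: length_vecs)
  also have "\<dots> = (\<Prod>j<length Q. trunc_pow n (b j) (Z j))"
    by (rule sum_vecs_binom_coeff_prod)
  also have "trunc_eq n \<dots> (\<Prod>j<length Q. \<Prod>i<length P. trunc_pow n (b j) (trunc_pow n (a i) (pair_var P Q i j) - 1))"
  proof (intro trunc_eq_prod)
    fix j
    have "Z j = (\<Prod>i<length P. 1 + (trunc_pow n (a i) (pair_var P Q i j) - 1)) - 1" by (simp add: Z_def)
    then show "trunc_eq n (trunc_pow n (b j) (Z j)) (\<Prod>i<length P. trunc_pow n (b j) (trunc_pow n (a i) (pair_var P Q i j) - 1))"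
      by (simp only: trunc_pow_prod_base trunc_pow_minus_1_deg_ge pair_var_deg_ge_1 finite_lessThan)
  qed
  also have "trunc_eq n \<dots> (\<Prod>j<length Q. \<Prod>i<length P. trunc_pow n (a i * b j) (pair_var P Q i j))"
    by (intro trunc_eq_prod, subst mult.commute) (rule trunc_pow_trunc_pow[OF pair_var_deg_ge_1])
  also have "\<dots> = (\<Prod>i<length P. \<Prod>j<length Q. trunc_pow n (a i * b j) (pair_var P Q i j))"
    by (rule prod.swap)
  finally show ?thesis .
qed

section \<open>Inversion over supports\<close>

lemma moebius_Pow_pair:
  fixes X :: "'i set \<Rightarrow> 'j set \<Rightarrow> 'r::comm_ring_1"
  assumes S0: "0 \<in> S" and Sd: "\<And>x y. x \<in> S \<Longrightarrow> y \<in> S \<Longrightarrow> x - y \<in> S"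
    and fin: "finite I0" "finite J0"
    and T: "\<And>I J. I \<subseteq> I0 \<Longrightarrow> J \<subseteq> J0 \<Longrightarrow> (\<Sum>I'\<in>Pow I. \<Sum>J'\<in>Pow J. X I' J') \<in> S"
  shows "X I0 J0 \<in> S"
  using fin T
proof (induction "card I0 + card J0" arbitrary: I0 J0 rule: less_induct)
  case less
  have Sa: "x \<in> S \<Longrightarrow> y \<in> S \<Longrightarrow> x + y \<in> S" for x y
    using Sd[of 0 y] Sd[of x "0 - y"] S0 by simp
  have Ss: "finite A \<Longrightarrow> (\<And>i. i \<in> A \<Longrightarrow> f i \<in> S) \<Longrightarrow> sum f A \<in> S" for f and A :: "('i set \<times> 'j set) set"
    by (induction A rule: finite_induct) (auto simp: S0 Sa)
  have fP: "finite (Pow I0 \<times> Pow J0)" using less.prems by simp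
  have "(\<Sum>I'\<in>Pow I0. \<Sum>J'\<in>Pow J0. X I' J') = (\<Sum>(I,J)\<in>Pow I0 \<times> Pow J0. X I J)"
    by (simp add: sum.cartesian_product)
  also have "\<dots> = X I0 J0 + (\<Sum>(I,J)\<in>Pow I0 \<times> Pow J0 - {(I0,J0)}. X I J)"
    by (subst sum.remove[OF fP, of "(I0,J0)"]) auto
  finally have split: "X I0 J0 = (\<Sum>I'\<in>Pow I0. \<Sum>J'\<in>Pow J0. X I' J') - (\<Sum>(I,J)\<in>Pow I0 \<times> Pow J0 - {(I0,J0)}. X I J)"
    by (simp add: algebra_simps)
  have "X I J \<in> S" if IJ: "(I,J) \<in> Pow I0 \<times> Pow J0 - {(I0,J0)}" for I J
  proof (rule less.hyps)
    have "I \<subset> I0 \<or> J \<subset> J0" "I \<subseteq> I0" "J \<subseteq> J0" using IJ by auto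
    then show "card I + card J < card I0 + card J0"
      using less.prems(1,2) by (meson add_le_less_mono add_less_le_mono card_mono psubset_card_mono)
    show "finite I" "finite J" using \<open>I \<subseteq> I0\<close> \<open>J \<subseteq> J0\<close> less.prems(1,2) finite_subset by auto
    show "(\<Sum>I''\<in>Pow I'. \<Sum>J''\<in>Pow J'. X I'' J'') \<in> S" if "I' \<subseteq> I" "J' \<subseteq> J" for I' J'
      using that \<open>I \<subseteq> I0\<close> \<open>J \<subseteq> J0\<close> less.prems(3) by blast
  qed
  then have "(\<Sum>(I,J)\<in>Pow I0 \<times> Pow J0 - {(I0,J0)}. X I J) \<in> S"
    using fP by (intro Ss) auto
  then show ?case using split Sd less.prems(3)[of I0 J0] by simp
qed

definition supp_vec :: "nat list \<Rightarrow> nat set" where "supp_vec d = {i. i < length d \<and> d!i \<noteq> 0}"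

lemma binom_coeff_restrict:
  "binom_coeff (\<lambda>i. if i \<in> I then a i else 0) d = (if supp_vec d \<subseteq> I then binom_coeff a d else 0)"
proof (cases "supp_vec d \<subseteq> I")
  case True
  then have "binom_coeff (\<lambda>i. if i \<in> I then a i else 0) d = binom_coeff a d"
    unfolding binom_coeff_def by (intro prod.cong refl) (use True in \<open>auto simp: supp_vec_def\<close>, metis (mono_tags, lifting) int_binom_0 mem_Collect_eq neq0_conv subsetD)
  then show ?thesis using True by simp
next
  case False
  then obtain i where i: "i < length d" "d!i \<noteq> 0" "i \<notin> I" by (auto simp: supp_vec_def)
  have "binom_coeff (\<lambda>i. if i \<in> I then a i else 0) d = 0"
    unfolding binom_coeff_def by (rule prod_zero) (use i in \<open>auto intro!: bexI[of _ i] simp: int_binom_zero\<close>)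
  then show ?thesis using False by simp
qed

lemma sum_group_supp_vec:
  assumes "finite A" "I \<subseteq> {..<m}" "\<And>d. d \<in> A \<Longrightarrow> length d = m"
  shows "(\<Sum>d\<in>A. if supp_vec d \<subseteq> I then x d else 0) = (\<Sum>I'\<in>Pow I. \<Sum>d\<in>{d\<in>A. supp_vec d = I'}. x d)"
proof -
  have "(\<Sum>d\<in>A. if supp_vec d \<subseteq> I then x d else 0) = (\<Sum>d\<in>{d\<in>A. supp_vec d \<subseteq> I}. x d)"
    by (simp add: sum.inter_filter assms)
  also have "\<dots> = (\<Sum>I'\<in>Pow I. \<Sum>d\<in>{d\<in>{d\<in>A. supp_vec d \<subseteq> I}. supp_vec d = I'}. x d)"
    by (rule sum.group[symmetric]) (use assms finite_subset in auto)
  also have "\<dots> = (\<Sum>I'\<in>Pow I. \<Sum>d\<in>{d\<in>A. supp_vec d = I'}. x d)"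
    by (intro sum.cong refl) auto
  finally show ?thesis .
qed

lemma sum_binom_coeff_restrict:
  fixes F :: "nat list \<Rightarrow> nat list \<Rightarrow> 'r::comm_ring_1"
  assumes A: "finite A" "\<And>d. d \<in> A \<Longrightarrow> length d = m" and B: "finite B" "\<And>e. e \<in> B \<Longrightarrow> length e = p"
    and I: "I \<subseteq> {..<m}" and J: "J \<subseteq> {..<p}"
  shows "(\<Sum>d\<in>A. \<Sum>e\<in>B. of_int (binom_coeff (\<lambda>i. if i \<in> I then a i else 0) d * binom_coeff (\<lambda>j. if j \<in> J then b j else 0) e) * F d e)
    = (\<Sum>I'\<in>Pow I. \<Sum>J'\<in>Pow J. \<Sum>d\<in>{d\<in>A. supp_vec d = I'}. \<Sum>e\<in>{e\<in>B. supp_vec e = J'}. of_int (binom_coeff a d * binom_coeff b e) * F d e)"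
proof -
  have "(\<Sum>d\<in>A. \<Sum>e\<in>B. of_int (binom_coeff (\<lambda>i. if i \<in> I then a i else 0) d * binom_coeff (\<lambda>j. if j \<in> J then b j else 0) e) * F d e)
      = (\<Sum>d\<in>A. if supp_vec d \<subseteq> I then (\<Sum>e\<in>B. if supp_vec e \<subseteq> J then of_int (binom_coeff a d * binom_coeff b e) * F d e else 0) else 0)"
    by (intro sum.cong refl) (auto simp: binom_coeff_restrict intro!: sum.cong)
  also have "\<dots> = (\<Sum>d\<in>A. if supp_vec d \<subseteq> I then (\<Sum>J'\<in>Pow J. \<Sum>e\<in>{e\<in>B. supp_vec e = J'}. of_int (binom_coeff a d * binom_coeff b e) * F d e) else 0)"
    by (intro sum.cong refl if_cong sum_group_supp_vec[OF B(1) J]) (auto intro: B(2))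
  also have "\<dots> = (\<Sum>I'\<in>Pow I. \<Sum>d\<in>{d\<in>A. supp_vec d = I'}. \<Sum>J'\<in>Pow J. \<Sum>e\<in>{e\<in>B. supp_vec e = J'}. of_int (binom_coeff a d * binom_coeff b e) * F d e)"
    by (rule sum_group_supp_vec[OF A(1) I]) (rule A(2))
  also have "\<dots> = (\<Sum>I'\<in>Pow I. \<Sum>J'\<in>Pow J. \<Sum>d\<in>{d\<in>A. supp_vec d = I'}. \<Sum>e\<in>{e\<in>B. supp_vec e = J'}. of_int (binom_coeff a d * binom_coeff b e) * F d e)"
    by (intro sum.cong refl sum.swap)
  finally show ?thesis .
qed

definition covering_rels :: "'i set \<Rightarrow> 'j set \<Rightarrow> ('i \<times> 'j) set set" where
  "covering_rels I J = {U. U \<subseteq> I \<times> J \<and> fst ` U = I \<and> snd ` U = J}"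

lemma prod_one_plus_Times:
  fixes h :: "'i \<times> 'j \<Rightarrow> 'r::comm_ring_1"
  assumes "finite I" "finite J"
  shows "(\<Prod>w\<in>I \<times> J. 1 + h w) = (\<Sum>I'\<in>Pow I. \<Sum>J'\<in>Pow J. \<Sum>U\<in>covering_rels I' J'. prod h U)"
proof -
  have "(\<Prod>w\<in>I \<times> J. 1 + h w) = (\<Sum>U\<in>Pow (I \<times> J). prod h U)"
    using prod_add[of "I \<times> J" h "\<lambda>_. 1"] assms by (simp add: add.commute)
  also have "\<dots> = (\<Sum>y\<in>Pow I \<times> Pow J. sum (prod h) {U \<in> Pow (I \<times> J). (fst ` U, snd ` U) = y})"
    by (rule sum.group[symmetric]) (use assms in auto)
  also have "\<dots> = (\<Sum>(I',J')\<in>Pow I \<times> Pow J. \<Sum>U\<in>covering_rels I' J'. prod h U)"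
  proof (intro sum.cong refl)
    fix y assume "y \<in> Pow I \<times> Pow J"
    then obtain I' J' where "y = (I',J')" "I' \<subseteq> I" "J' \<subseteq> J" by auto
    moreover have "{U \<in> Pow (I \<times> J). (fst ` U, snd ` U) = (I',J')} = covering_rels I' J'"
      using \<open>I' \<subseteq> I\<close> \<open>J' \<subseteq> J\<close> by (auto simp: covering_rels_def) (force intro: image_eqI)+
    ultimately show "sum (prod h) {U \<in> Pow (I \<times> J). (fst ` U, snd ` U) = y}
        = (case y of (I',J') \<Rightarrow> \<Sum>U\<in>covering_rels I' J'. prod h U)" by simp
  qed
  finally show ?thesis by (simp add: sum.cartesian_product)
qed

section \<open>Compatibility of the weight with composition\<close>

lemma finite_maze_pairings: "finite (maze_pairings P Q)"
  by (rule finite_subset[of _ "Pow ({..<length P} \<times> {..<length Q})"]) (auto simp: maze_pairings_def)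

lemma laby_weight_comp_gen_eq:
  "laby_weight n (laby_comp_gen P Q) = (\<Sum>U\<in>maze_pairings P Q.
     \<Prod>w\<in>U. trunc_pow n (plab (P!fst w) * plab (Q!snd w)) (pair_var P Q (fst w) (snd w)) - 1)"
proof -
  have "laby_weight n (laby_comp_gen P Q) = (\<Sum>U\<in>maze_pairings P Q.
      maze_weight n (map (\<lambda>(i,j). (psrc (Q!j), plab (P!i) * plab (Q!j), ptgt (P!i))) (sorted_list_of_set U)))"
    unfolding laby_comp_gen_def laby_weight_def by (simp add: frag_extend_sum finite_maze_pairings o_def)
  also have "\<dots> = (\<Sum>U\<in>maze_pairings P Q.
     \<Prod>w\<in>U. trunc_pow n (plab (P!fst w) * plab (Q!snd w)) (pair_var P Q (fst w) (snd w)) - 1)"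
  proof (intro sum.cong refl)
    fix U assume U: "U \<in> maze_pairings P Q"
    have fU: "finite U"
    proof (rule finite_subset)
      show "U \<subseteq> {..<length P} \<times> {..<length Q}" using U by (auto simp: maze_pairings_def)
    qed simp
    define c where "c = (\<lambda>(i,j). (psrc (Q!j), plab (P!i) * plab (Q!j), ptgt (P!i)))"
    define \<phi> where "\<phi> = (\<lambda>p::'a \<times> int \<times> 'a. trunc_pow n (plab p) (edge_var (passage_edge p)) - 1)"
    have "maze_weight n (map c (sorted_list_of_set U)) = prod_mset (image_mset \<phi> (mset (map c (sorted_list_of_set U))))"
      unfolding maze_weight_prod \<phi>_def by (rule prod_nth_eq_prod_mset)
    also have "\<dots> = prod_mset (image_mset (\<phi> \<circ> c) (mset_set U))"
      by (simp add: mset_map mset_sorted_set multiset.map_comp)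
    also have "\<dots> = prod (\<phi> \<circ> c) U" by (simp only: prod_unfold_prod_mset)
    also have "\<dots> = (\<Prod>w\<in>U. trunc_pow n (plab (P!fst w) * plab (Q!snd w)) (pair_var P Q (fst w) (snd w)) - 1)"
    proof (intro prod.cong refl)
      fix w assume w: "w \<in> U"
      then have "psrc (P!fst w) = ptgt (Q!snd w)" using U by (auto simp: maze_pairings_def)
      then show "(\<phi> \<circ> c) w = trunc_pow n (plab (P!fst w) * plab (Q!snd w)) (pair_var P Q (fst w) (snd w)) - 1"
        by (simp add: \<phi>_def c_def case_prod_beta pair_var_def edge_factor_def passage_edge_def plab_def psrc_def ptgt_def)
    qed
    finally show "maze_weight n (map (\<lambda>(i,j). (psrc (Q!j), plab (P!i) * plab (Q!j), ptgt (P!i))) (sorted_list_of_set U))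
        = (\<Prod>w\<in>U. trunc_pow n (plab (P!fst w) * plab (Q!snd w)) (pair_var P Q (fst w) (snd w)) - 1)"
      unfolding c_def .
  qed
  finally show ?thesis .
qed

lemma laby_weight_comp_gen_covering_rels:
  "laby_weight n (laby_comp_gen P Q) = (\<Sum>U\<in>covering_rels {..<length P} {..<length Q}.
     \<Prod>w\<in>U. trunc_pow n (plab (P!fst w) * plab (Q!snd w)) (pair_var P Q (fst w) (snd w)) - 1)"
  unfolding laby_weight_comp_gen_eq
proof (rule sum.mono_neutral_left)
  show "finite (covering_rels {..<length P} {..<length Q})"
    by (rule finite_subset[of _ "Pow ({..<length P} \<times> {..<length Q})"]) (auto simp: covering_rels_def)
  show "maze_pairings P Q \<subseteq> covering_rels {..<length P} {..<length Q}"
    by (auto simp: maze_pairings_def covering_rels_def)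
  show "\<forall>U\<in>covering_rels {..<length P} {..<length Q} - maze_pairings P Q.
      (\<Prod>w\<in>U. trunc_pow n (plab (P!fst w) * plab (Q!snd w)) (pair_var P Q (fst w) (snd w)) - 1) = 0"
  proof
    fix U assume U: "U \<in> covering_rels {..<length P} {..<length Q} - maze_pairings P Q"
    then have "\<not> U \<subseteq> {(i,j). i < length P \<and> j < length Q \<and> psrc (P!i) = ptgt (Q!j)}"
      "U \<subseteq> {..<length P} \<times> {..<length Q}"
      by (auto simp: covering_rels_def maze_pairings_def)
    then obtain w where "w \<in> U" "psrc (P!fst w) \<noteq> ptgt (Q!snd w)" by fastforce
    moreover have "finite U"
      using U by (auto simp: covering_rels_def intro: finite_subset[of U "{..<length P} \<times> {..<length Q}"])
    ultimately show "(\<Prod>w\<in>U. trunc_pow n (plab (P!fst w) * plab (Q!snd w)) (pair_var P Q (fst w) (snd w)) - 1) = 0"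
      by (intro prod_zero bexI[of _ w]) (simp_all add: pair_var_noncomposable)
  qed
qed

text \<open>Labels set to 0 outside I and J kill every term whose support leaves I or J
  (binom_coeff_restrict) and every factor outside I \<times> J (trunc_pow_0).\<close>
lemma pullback_sums_restricted:
  fixes a b :: "nat \<Rightarrow> int"
  assumes I: "I \<subseteq> {..<length P}" and J: "J \<subseteq> {..<length Q}"
  shows "trunc_eq n
    (\<Sum>I'\<in>Pow I. \<Sum>J'\<in>Pow J. \<Sum>d\<in>{d\<in>vecs {..n} (length P). supp_vec d = I'}. \<Sum>e\<in>{e\<in>vecs {..n} (length Q). supp_vec e = J'}.
        of_int (binom_coeff a d * binom_coeff b e) * pullback_sum_I P Q d e)
    (\<Sum>I'\<in>Pow I. \<Sum>J'\<in>Pow J. \<Sum>U\<in>covering_rels I' J'.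
        \<Prod>w\<in>U. trunc_pow n (a (fst w) * b (snd w)) (pair_var P Q (fst w) (snd w)) - 1)"
proof -
  define aI where "aI i = (if i \<in> I then a i else 0)" for i
  define bJ where "bJ j = (if j \<in> J then b j else 0)" for j
  have "(\<Sum>I'\<in>Pow I. \<Sum>J'\<in>Pow J. \<Sum>d\<in>{d\<in>vecs {..n} (length P). supp_vec d = I'}. \<Sum>e\<in>{e\<in>vecs {..n} (length Q). supp_vec e = J'}.
        of_int (binom_coeff a d * binom_coeff b e) * pullback_sum_I P Q d e)
      = (\<Sum>d\<in>vecs {..n} (length P). \<Sum>e\<in>vecs {..n} (length Q). of_int (binom_coeff aI d * binom_coeff bJ e) * pullback_sum_I P Q d e)"
    unfolding aI_def bJ_def
    by (rule sum_binom_coeff_restrict[symmetric]) (use I J in \<open>auto simp: finite_vecs length_vecs\<close>)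
  also have "trunc_eq n \<dots> (\<Prod>i<length P. \<Prod>j<length Q. trunc_pow n (aI i * bJ j) (pair_var P Q i j))"
    by (rule pullback_sums_int_labels)
  also have "\<dots> = (\<Prod>w\<in>{..<length P} \<times> {..<length Q}. trunc_pow n (aI (fst w) * bJ (snd w)) (pair_var P Q (fst w) (snd w)))"
    by (simp add: prod.cartesian_product case_prod_beta)
  also have "\<dots> = (\<Prod>w\<in>I \<times> J. trunc_pow n (a (fst w) * b (snd w)) (pair_var P Q (fst w) (snd w)))"
    by (rule prod.mono_neutral_cong_right) (use I J in \<open>auto simp: aI_def bJ_def\<close>)
  also have "\<dots> = (\<Sum>I'\<in>Pow I. \<Sum>J'\<in>Pow J. \<Sum>U\<in>covering_rels I' J'.
        \<Prod>w\<in>U. trunc_pow n (a (fst w) * b (snd w)) (pair_var P Q (fst w) (snd w)) - 1)"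
    using prod_one_plus_Times[of I J "\<lambda>w. trunc_pow n (a (fst w) * b (snd w)) (pair_var P Q (fst w) (snd w)) - 1"]
      finite_subset[OF I] finite_subset[OF J] by simp
  finally show ?thesis .
qed

lemma vecs_supp_vec_full: "{d\<in>vecs {..n} k. supp_vec d = {..<k}} = vecs {1..n} k"
proof (intro set_eqI iffI)
  fix d assume "d \<in> {d\<in>vecs {..n} k. supp_vec d = {..<k}}"
  then have l: "length d = k" and s: "set d \<subseteq> {..n}" and sp: "supp_vec d = {..<k}"
    by (auto simp: vecs_def)
  have "x \<in> {1..n}" if "x \<in> set d" for x
  proof -
    obtain i where i: "i < length d" "d!i = x" using \<open>x \<in> set d\<close> by (auto simp: in_set_conv_nth)
    then have "i \<in> supp_vec d" using sp l by auto
    then show ?thesis using i s \<open>x \<in> set d\<close> by (auto simp: supp_vec_def)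
  qed
  then show "d \<in> vecs {1..n} k" using l by (auto simp: vecs_def)
next
  fix d assume "d \<in> vecs {1..n} k"
  then have l: "length d = k" and s: "set d \<subseteq> {1..n}" by (auto simp: vecs_def)
  have "d!i \<noteq> 0" if "i < k" for i
    using s nth_mem[of i d] that l by fastforce
  then have "supp_vec d = {..<k}" using l by (auto simp: supp_vec_def)
  moreover have "set d \<subseteq> {..n}" using s by auto
  ultimately show "d \<in> {d\<in>vecs {..n} k. supp_vec d = {..<k}}" using l by (simp add: vecs_def)
qed

lemma laby_weight_comp_gen:
  "trunc_eq n (laby_weight n (laby_comp_gen P Q))
     (\<Sum>d\<in>mult_vectors n P. \<Sum>e\<in>mult_vectors n Q. of_int (mult_coeff P d * mult_coeff Q e) * pullback_sum (I_corr P d) (I_corr Q e))"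
proof -
  define a where "a i = plab (P!i)" for i
  define b where "b j = plab (Q!j)" for j
  define f where "f I J = (\<Sum>d\<in>{d\<in>vecs {..n} (length P). supp_vec d = I}. \<Sum>e\<in>{e\<in>vecs {..n} (length Q). supp_vec e = J}.
      of_int (binom_coeff a d * binom_coeff b e) * pullback_sum_I P Q d e)" for I J
  define h where "h I J = (\<Sum>U\<in>covering_rels I J.
      \<Prod>w\<in>U. trunc_pow n (a (fst w) * b (snd w)) (pair_var P Q (fst w) (snd w)) - 1)" for I J
  have "f {..<length P} {..<length Q} - h {..<length P} {..<length Q} \<in> deg_gt n"
  proof (rule moebius_Pow_pair[where X="\<lambda>I J. f I J - h I J"])
    fix I J assume "I \<subseteq> {..<length P}" "J \<subseteq> {..<length Q}"
    from pullback_sums_restricted[OF this, of n a b]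
    show "(\<Sum>I'\<in>Pow I. \<Sum>J'\<in>Pow J. f I' J' - h I' J') \<in> deg_gt n"
      by (simp add: trunc_eq_def f_def h_def sum_subtractf)
  qed (auto simp: deg_gt_diff)
  moreover have "f {..<length P} {..<length Q} = (\<Sum>d\<in>mult_vectors n P. \<Sum>e\<in>mult_vectors n Q.
      of_int (mult_coeff P d * mult_coeff Q e) * pullback_sum (I_corr P d) (I_corr Q e))"
    unfolding f_def vecs_supp_vec_full mult_vectors_eq_vecs
    by (intro sum.cong refl) (auto simp: binom_coeff_def mult_coeff_def a_def b_def vecs_def pullback_sum_I_def)
  moreover have "h {..<length P} {..<length Q} = laby_weight n (laby_comp_gen P Q)"
    by (simp add: h_def a_def b_def laby_weight_comp_gen_covering_rels)
  ultimately show ?thesis by (metis trunc_eq_def trunc_eq_sym)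
qed

section \<open>The weight vanishes on the ideal of Laby_n\<close>

lemma trunc_eq_deg_gt_trans: "trunc_eq n A B \<Longrightarrow> B \<in> deg_gt n \<Longrightarrow> A \<in> deg_gt n"
  unfolding trunc_eq_def deg_gt_def using deg_ge_add by fastforce

lemma frag_extend_frag_extend:
  "frag_extend f (frag_extend h x) = frag_extend (\<lambda>q. frag_extend f (h q)) x"
  using subset_UNIV
  by (induction x rule: frag_induction) (auto simp: frag_extend_diff)

lemma frag_extend_trunc_eq:
  assumes "\<And>q. q \<in> Poly_Mapping.keys x \<Longrightarrow> trunc_eq n (f q) (g q)"
  shows "trunc_eq n (frag_extend f x) (frag_extend g x)"
  unfolding frag_extend_def using assms by (intro trunc_eq_sum trunc_eq_cmul) auto

lemma frag_extend_deg_gt: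
  assumes "y \<in> deg_gt n" "\<And>M. n < size M \<Longrightarrow> G M \<in> deg_gt n"
  shows "frag_extend G y \<in> deg_gt n"
  unfolding frag_extend_def deg_gt_def
proof (intro deg_ge_sum deg_ge_cmul)
  fix M assume "M \<in> Poly_Mapping.keys y"
  then have "n < size M" using assms(1) by (auto simp: deg_gt_def deg_ge_def)
  then show "G M \<in> deg_ge (Suc n)" using assms(2) by (simp add: deg_gt_def)
qed

lemma pullback_sum_deg_gt:
  assumes "n < length v \<or> n < length u"
  shows "pullback_sum v u \<in> deg_gt n"
  unfolding pullback_sum_def deg_gt_def
proof (intro deg_ge_sum deg_ge_frag_of)
  fix W assume W: "W \<in> weak_pullbacks v u"
  have fW: "finite W"
    by (rule finite_subset[of _ "{..<length v} \<times> {..<length u}"]) (use W in \<open>auto simp: weak_pullbacks_def\<close>)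
  have "length v = card (fst ` W)" "length u = card (snd ` W)" using W by (simp_all add: weak_pullbacks_def)
  then have "length v \<le> card W" "length u \<le> card W" using card_image_le[OF fW] by metis+
  then show "Suc n \<le> size (image_mset (pullback_edge v u) (mset_set W))" using assms by auto
qed

lemma maze_weight_eq_sum: "maze_weight n q = (\<Sum>e\<in>mult_vectors n q. frag_cmul (mult_coeff q e) (frag_of (mset (I_corr q e))))"
  by (simp add: maze_weight_def I_corr_def)

lemma laby_weight_frag_extend_deg_gt:
  assumes x: "laby_weight n x \<in> deg_gt n"
    and c: "\<And>q. trunc_eq n (laby_weight n (c q)) (frag_extend G (maze_weight n q))"
    and G: "\<And>M. n < size M \<Longrightarrow> G M \<in> deg_gt n"
  shows "laby_weight n (frag_extend c x) \<in> deg_gt n"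
proof -
  have "trunc_eq n (laby_weight n (frag_extend c x)) (frag_extend (\<lambda>q. frag_extend G (maze_weight n q)) x)"
    unfolding laby_weight_def frag_extend_frag_extend
    by (intro frag_extend_trunc_eq) (simp add: c[unfolded laby_weight_def])
  also have "frag_extend (\<lambda>q. frag_extend G (maze_weight n q)) x = frag_extend G (laby_weight n x)"
    by (simp add: laby_weight_def frag_extend_frag_extend)
  finally have "trunc_eq n (laby_weight n (frag_extend c x)) (frag_extend G (laby_weight n x))" .
  moreover have "frag_extend G (laby_weight n x) \<in> deg_gt n" using x G by (rule frag_extend_deg_gt)
  ultimately show ?thesis by (rule trunc_eq_deg_gt_trans)
qed

lemma laby_weight_comp_left:
  assumes "laby_weight n x \<in> deg_gt n"
  shows "laby_weight n (laby_comp (frag_of g) x) \<in> deg_gt n"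
proof -
  define G where "G M = (\<Sum>d\<in>mult_vectors n g. of_int (mult_coeff g d) * pullback_sum_mset (mset (I_corr g d)) M)" for M
  have "laby_weight n (frag_extend (laby_comp_gen g) x) \<in> deg_gt n"
  proof (rule laby_weight_frag_extend_deg_gt[OF assms])
    fix q
    have "frag_extend G (maze_weight n q) = (\<Sum>e\<in>mult_vectors n q. of_int (mult_coeff q e) * G (mset (I_corr q e)))"
      unfolding maze_weight_eq_sum
      by (simp add: frag_extend_sum finite_mult_vectors frag_extend_cmul o_def frag_cmul_of_int[symmetric])
    also have "\<dots> = (\<Sum>d\<in>mult_vectors n g. \<Sum>e\<in>mult_vectors n q.
        of_int (mult_coeff g d * mult_coeff q e) * pullback_sum (I_corr g d) (I_corr q e))"
      unfolding G_def by (simp add: sum_distrib_left pullback_sum_eq_mset sum.swap[of _ "mult_vectors n q"] algebra_simps)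
    finally show "trunc_eq n (laby_weight n (laby_comp_gen g q)) (frag_extend G (maze_weight n q))"
      using laby_weight_comp_gen by simp
  next
    fix M :: "('a \<times> 'a) multiset" assume "n < size M"
    then have "n < length (list_of M)" by (metis mset_list_of size_mset)
    then show "G M \<in> deg_gt n" unfolding G_def pullback_sum_mset_def deg_gt_def
      by (intro deg_ge_sum deg_ge_mult_left) (use pullback_sum_deg_gt in \<open>auto simp: deg_gt_def\<close>)
  qed
  then show ?thesis by (simp add: laby_comp_def bilin_def)
qed

lemma laby_weight_comp_right:
  assumes "laby_weight n x \<in> deg_gt n"
  shows "laby_weight n (laby_comp x (frag_of g)) \<in> deg_gt n"
proof -
  define G where "G M = (\<Sum>e\<in>mult_vectors n g. of_int (mult_coeff g e) * pullback_sum_mset M (mset (I_corr g e)))" for M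
  have "laby_weight n (frag_extend (\<lambda>p. laby_comp_gen p g) x) \<in> deg_gt n"
  proof (rule laby_weight_frag_extend_deg_gt[OF assms])
    fix p
    have "frag_extend G (maze_weight n p) = (\<Sum>d\<in>mult_vectors n p. of_int (mult_coeff p d) * G (mset (I_corr p d)))"
      unfolding maze_weight_eq_sum
      by (simp add: frag_extend_sum finite_mult_vectors frag_extend_cmul o_def frag_cmul_of_int[symmetric])
    also have "\<dots> = (\<Sum>d\<in>mult_vectors n p. \<Sum>e\<in>mult_vectors n g.
        of_int (mult_coeff p d * mult_coeff g e) * pullback_sum (I_corr p d) (I_corr g e))"
      unfolding G_def by (simp add: sum_distrib_left pullback_sum_eq_mset algebra_simps)
    finally show "trunc_eq n (laby_weight n (laby_comp_gen p g)) (frag_extend G (maze_weight n p))"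
      using laby_weight_comp_gen by simp
  next
    fix M :: "('a \<times> 'a) multiset" assume "n < size M"
    then have "n < length (list_of M)" by (metis mset_list_of size_mset)
    then show "G M \<in> deg_gt n" unfolding G_def pullback_sum_mset_def deg_gt_def
      by (intro deg_ge_sum deg_ge_mult_left) (use pullback_sum_deg_gt in \<open>auto simp: deg_gt_def\<close>)
  qed
  then show ?thesis by (simp add: laby_comp_def bilin_def)
qed

definition passage_weight :: "nat \<Rightarrow> 'a \<times> int \<times> 'a \<Rightarrow> (('a \<times> 'a) multiset \<Rightarrow>\<^sub>0 int)" where
  "passage_weight n p = trunc_pow n (plab p) (edge_var (passage_edge p)) - 1"

lemma maze_weight_prod_mset: "maze_weight n P = prod_mset (image_mset (passage_weight n) (mset P))"
  unfolding maze_weight_prod passage_weight_def by (rule prod_nth_eq_prod_mset)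

lemma mset_eq_image_nth: "mset xs = image_mset (nth xs) (mset_set {..<length xs})"
  by (metis map_nth mset_map mset_set_upto_eq_mset_upto)

lemma maze_perm_imp_mset_eq: "maze_perm P P' \<Longrightarrow> mset P = mset P'"
proof -
  assume "maze_perm P P'"
  then obtain \<pi> where l: "length P = length P'" and b: "bij_betw \<pi> {..<length P} {..<length P'}"
    and e: "\<forall>i<length P. P' ! (\<pi> i) = P ! i" by (auto simp: maze_perm_def)
  have "mset P' = image_mset (nth P') (mset_set (\<pi> ` {..<length P}))"
    using b by (simp add: mset_eq_image_nth bij_betw_def)
  also have "\<dots> = image_mset (nth P') (image_mset \<pi> (mset_set {..<length P}))"
    using b by (simp add: image_mset_mset_set bij_betw_def)
  also have "\<dots> = image_mset (nth P) (mset_set {..<length P})"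
    unfolding multiset.map_comp by (rule image_mset_cong) (use e in auto)
  finally show ?thesis by (simp add: mset_eq_image_nth)
qed

lemma trunc_pow_1_eq: "1 \<le> n \<Longrightarrow> trunc_pow n 1 N = 1 + N"
proof -
  assume n: "1 \<le> n"
  have "trunc_pow n 1 N - 1 = (\<Sum>k\<in>{1..n}. of_int (int_binom 1 k) * N ^ k)" by (rule trunc_pow_minus_1)
  also have "\<dots> = (\<Sum>k\<in>{1}. of_int (int_binom 1 k) * N ^ k)"
    by (rule sum.mono_neutral_right) (use n in \<open>auto simp: int_binom_1\<close>)
  finally have "trunc_pow n 1 N - 1 = N" by (simp add: int_binom_1)
  then show ?thesis by (metis add.commute diff_add_cancel)
qed

lemma prod_mset_edge_var: "prod_mset (image_mset edge_var M) = frag_of M"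
  by (induction M) (auto simp: edge_var_def frag_of_mult add.commute)

lemma maze_weight_pure:
  assumes "\<forall>p\<in>set R. plab p = 1" and "1 \<le> n"
  shows "maze_weight n R = frag_of (mset (maze_corr R))"
proof -
  have "image_mset (passage_weight n) (mset R) = image_mset (edge_var \<circ> passage_edge) (mset R)"
    by (rule image_mset_cong) (use assms in \<open>auto simp: passage_weight_def trunc_pow_1_eq\<close>)
  moreover have "mset (maze_corr R) = image_mset passage_edge (mset R)"
  proof -
    have "(\<lambda>(x::'a, l::int, y::'a). (x, y)) = passage_edge" by (auto simp: passage_edge_def psrc_def ptgt_def)
    then show ?thesis by (simp add: maze_corr_def mset_map)
  qed
  ultimately show ?thesis
    by (simp add: maze_weight_prod_mset prod_mset_edge_var flip: multiset.map_comp)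
qed

lemma plab_maze_I: "p \<in> set (maze_I P d) \<Longrightarrow> plab p = 1"
  by (auto simp: maze_I_def plab_def)

lemma maze_weight_label_0: "maze_weight n (P @ [(x, 0, y)]) = 0"
  by (simp add: maze_weight_prod_mset passage_weight_def plab_def)

lemma maze_weight_label_add:
  "maze_weight n (P @ [(x, a + b, y)]) - maze_weight n (P @ [(x, a, y)]) - maze_weight n (P @ [(x, b, y)])
     - maze_weight n (P @ [(x, a, y), (x, b, y)]) \<in> deg_gt n"
proof -
  define c where "c = prod_mset (image_mset (passage_weight n) (mset P))"
  define X where "X = edge_var (x, y)"
  have "maze_weight n (P @ [(x, a + b, y)]) - maze_weight n (P @ [(x, a, y)]) - maze_weight n (P @ [(x, b, y)])
      - maze_weight n (P @ [(x, a, y), (x, b, y)])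
    = c * ((trunc_pow n (a + b) X - 1) - (trunc_pow n a X - 1) - (trunc_pow n b X - 1)
        - (trunc_pow n a X - 1) * (trunc_pow n b X - 1))"
    by (simp add: maze_weight_prod_mset c_def X_def passage_weight_def plab_def passage_edge_def
        psrc_def ptgt_def algebra_simps)
  also have "\<dots> = c * (trunc_pow n (a + b) X - trunc_pow n a X * trunc_pow n b X)"
    by (simp add: algebra_simps)
  finally show ?thesis
    using trunc_pow_add[OF edge_var_deg_ge_1[of "(x,y)"], of n a b]
    by (simp add: trunc_eq_def X_def deg_gt_def deg_ge_mult_left)
qed

lemma maze_weight_deg_gt: "n < length P \<Longrightarrow> maze_weight n P \<in> deg_gt n"
proof -
  assume "n < length P"
  moreover have "maze_weight n P \<in> deg_ge (1 * card {..<length P})"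
    unfolding maze_weight_prod
    by (rule deg_ge_prod) (auto simp: trunc_pow_minus_1_deg_ge[OF edge_var_deg_ge_1, simplified])
  ultimately show ?thesis by (simp add: deg_gt_def deg_ge_mono)
qed

lemma maze_weight_expand:
  "maze_weight n P = (\<Sum>d\<in>mult_vectors n P. frag_cmul (mult_coeff P d) (maze_weight n (maze_I P d)))"
  unfolding maze_weight_def[of n P]
proof (intro sum.cong refl arg_cong[where f="frag_cmul _"])
  fix d assume d: "d \<in> mult_vectors n P"
  show "frag_of (mset (maze_corr (maze_I P d))) = maze_weight n (maze_I P d)"
  proof (cases "1 \<le> n")
    case True
    then show ?thesis by (simp add: maze_weight_pure plab_maze_I)
  next
    case False
    then have "P = []" using d by (cases P) (auto simp: mult_vectors_def)
    then have "d = []" using d by (simp add: mult_vectors_def)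
    then show ?thesis using \<open>P = []\<close> by (simp add: maze_I_def maze_weight_prod_mset maze_corr_def)
  qed
qed

lemma laby_weight_rel: "r \<in> laby_rel n \<Longrightarrow> laby_weight n r \<in> deg_gt n"
  unfolding laby_rel_def
proof (elim UnE CollectE exE conjE)
  fix P P' assume "r = frag_of P - frag_of P'" "maze_perm P P'"
  then show ?thesis by (simp add: laby_weight_def frag_extend_diff maze_weight_prod_mset maze_perm_imp_mset_eq)
next
  fix P x y assume "r = frag_of (P @ [(x, 0, y)])"
  then show ?thesis by (simp add: laby_weight_def maze_weight_label_0)
next
  fix P x y a b
  assume "r = frag_of (P @ [(x, a + b, y)]) - frag_of (P @ [(x, a, y)]) - frag_of (P @ [(x, b, y)]) -
      frag_of (P @ [(x, a, y), (x, b, y)])"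
  then show ?thesis by (simp add: laby_weight_def frag_extend_diff maze_weight_label_add)
next
  fix P assume "r = frag_of P" "n < length P"
  then show ?thesis by (simp add: laby_weight_def maze_weight_deg_gt)
next
  fix P assume "r = frag_of P - (\<Sum>d\<in>mult_vectors n P.
        frag_cmul (\<Prod>i<length P. int_binom (plab (P!i)) (d!i)) (frag_of (maze_I P d)))"
  then have "laby_weight n r = maze_weight n P
      - (\<Sum>d\<in>mult_vectors n P. frag_cmul (mult_coeff P d) (maze_weight n (maze_I P d)))"
    by (simp add: laby_weight_def frag_extend_diff frag_extend_sum finite_mult_vectors frag_extend_cmul
        mult_coeff_def o_def)
  then show ?thesis by (simp flip: maze_weight_expand)
qed

lemma laby_weight_ideal: "x \<in> laby_ideal n \<Longrightarrow> laby_weight n x \<in> deg_gt n"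
  unfolding laby_ideal_def
proof (induction rule: gen_ideal.induct)
  case (gen_base r) then show ?case by (rule laby_weight_rel)
next
  case gen_zero then show ?case by (simp add: laby_weight_def)
next
  case (gen_diff a b) then show ?case by (simp add: laby_weight_def frag_extend_diff deg_gt_diff)
next
  case (gen_left a g) then show ?case by (intro laby_weight_comp_left) simp
next
  case (gen_right a g) then show ?case by (intro laby_weight_comp_right) simp
qed

lemma gen_ideal_add: "a \<in> gen_ideal c R \<Longrightarrow> b \<in> gen_ideal c R \<Longrightarrow> a + b \<in> gen_ideal c R"
  using gen_diff[of a c R "0 - b"] gen_diff[OF gen_zero, of b c R] by simp

lemma gen_ideal_cmul: "a \<in> gen_ideal c R \<Longrightarrow> frag_cmul k a \<in> gen_ideal c R"
  by (rule frag_closure_minus_cmul[where P="\<lambda>x. x \<in> gen_ideal c R"]) (auto intro: gen_zero gen_diff)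

lemma gen_ideal_sum: "(\<And>i. i \<in> I \<Longrightarrow> f i \<in> gen_ideal c R) \<Longrightarrow> sum f I \<in> gen_ideal c R"
  by (induction I rule: infinite_finite_induct) (auto intro: gen_zero gen_ideal_add)

lemma gen_ideal_frag_extend: "(\<And>q. q \<in> Poly_Mapping.keys x \<Longrightarrow> f q \<in> gen_ideal c R) \<Longrightarrow> frag_extend f x \<in> gen_ideal c R"
  unfolding frag_extend_def by (intro gen_ideal_sum gen_ideal_cmul) auto

lemma frag_extend_diff_fun: "frag_extend (\<lambda>x. f x - g x) y = frag_extend f y - frag_extend g y"
  using subset_UNIV
  by (induction y rule: frag_induction) (auto simp: frag_extend_diff)

section \<open>The functor Phi\<close>

lemma Phi_of [simp]: "Phi (frag_of c) = frag_of (corr_to_maze c)" by (simp add: Phi_def)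

lemma Phi_diff: "Phi (a - b) = Phi a - Phi b" by (simp add: Phi_def frag_extend_diff)

lemma Phi_0 [simp]: "Phi 0 = 0" by (simp add: Phi_def)

lemma length_corr_to_maze [simp]: "length (corr_to_maze c) = length c" by (simp add: corr_to_maze_def)

lemma nth_corr_to_maze: "i < length c \<Longrightarrow> corr_to_maze c ! i = (fst (c!i), 1, snd (c!i))"
  by (simp add: corr_to_maze_def case_prod_beta)

lemma Phi_sur_comp_gen: "Phi (sur_comp_gen v u) = laby_comp_gen (corr_to_maze v) (corr_to_maze u)"
proof -
  have wp: "weak_pullbacks v u = maze_pairings (corr_to_maze v) (corr_to_maze u)"
    by (auto simp: weak_pullbacks_def maze_pairings_def nth_corr_to_maze psrc_def ptgt_def)
  have "Phi (sur_comp_gen v u) = (\<Sum>W\<in>weak_pullbacks v u.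
      frag_of (corr_to_maze (map (\<lambda>(i,j). (fst (u!j), snd (v!i))) (sorted_list_of_set W))))"
    unfolding sur_comp_gen_def Phi_def by (simp add: frag_extend_sum weak_pullbacks_eq finite_pullbacks_onto o_def)
  also have "\<dots> = laby_comp_gen (corr_to_maze v) (corr_to_maze u)"
    unfolding laby_comp_gen_def wp[symmetric]
  proof (intro sum.cong refl arg_cong[where f=frag_of])
    fix W assume W: "W \<in> weak_pullbacks v u"
    have "\<forall>w\<in>set (sorted_list_of_set W). fst w < length v \<and> snd w < length u"
    proof
      fix w assume "w \<in> set (sorted_list_of_set W)"
      moreover have "finite W"
        by (rule finite_subset[of _ "{..<length v} \<times> {..<length u}"]) (use W in \<open>auto simp: weak_pullbacks_def\<close>)
      ultimately have "w \<in> W" by simp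
      then show "fst w < length v \<and> snd w < length u" using W by (auto simp: weak_pullbacks_def)
    qed
    then show "corr_to_maze (map (\<lambda>(i,j). (fst (u!j), snd (v!i))) (sorted_list_of_set W)) =
        map (\<lambda>(i,j). (psrc (corr_to_maze u ! j), plab (corr_to_maze v ! i) * plab (corr_to_maze u ! j), ptgt (corr_to_maze v ! i))) (sorted_list_of_set W)"
      by (auto simp: corr_to_maze_def nth_corr_to_maze psrc_def ptgt_def plab_def case_prod_beta intro!: map_cong)
  qed
  finally show ?thesis .
qed

lemma Phi_sur_comp: "Phi (sur_comp a b) = laby_comp (Phi a) (Phi b)"
proof -
  have "Phi (sur_comp a b) = frag_extend (\<lambda>p. frag_extend (\<lambda>q. laby_comp_gen (corr_to_maze p) (corr_to_maze q)) b) a"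
    unfolding sur_comp_def bilin_def Phi_def
    by (simp add: frag_extend_frag_extend Phi_sur_comp_gen[unfolded Phi_def])
  also have "\<dots> = laby_comp (Phi a) (Phi b)"
    unfolding laby_comp_def bilin_def Phi_def
    by (simp add: frag_extend_compose[unfolded o_def])
  finally show ?thesis .
qed

lemma Phi_sur_ideal: "a \<in> sur_ideal n \<Longrightarrow> Phi a \<in> laby_ideal n"
  unfolding sur_ideal_def laby_ideal_def
proof (induction rule: gen_ideal.induct)
  case (gen_base r)
  then show ?case unfolding sur_rel_def
  proof (elim UnE CollectE exE conjE)
    fix c c' assume r: "r = frag_of c - frag_of c'" and iso: "corr_iso c c'"
    obtain \<pi> where l: "length c = length c'" and b: "bij_betw \<pi> {..<length c} {..<length c'}"
      and e: "\<forall>i<length c. c' ! (\<pi> i) = c ! i" using iso unfolding corr_iso_def by blast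
    have "\<forall>i<length (corr_to_maze c). corr_to_maze c' ! (\<pi> i) = corr_to_maze c ! i"
    proof (intro allI impI)
      fix i assume i: "i < length (corr_to_maze c)"
      then have "\<pi> i < length c'" using b by (auto simp: bij_betw_def)
      then show "corr_to_maze c' ! (\<pi> i) = corr_to_maze c ! i" using e i by (simp add: nth_corr_to_maze)
    qed
    then have "maze_perm (corr_to_maze c) (corr_to_maze c')"
      unfolding maze_perm_def using l b by auto
    then have "Phi r \<in> laby_rel n" unfolding r laby_rel_def by (auto simp: Phi_diff)
    then show ?thesis by (rule gen_ideal.gen_base)
  next
    fix c assume r: "r = frag_of c" and l: "n < length c"
    then have "Phi r \<in> laby_rel n" unfolding laby_rel_def by auto
    then show ?thesis by (rule gen_ideal.gen_base)
  qed
next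
  case gen_zero then show ?case by (simp add: gen_ideal.gen_zero)
next
  case (gen_diff a b) then show ?case by (simp add: Phi_diff gen_ideal.gen_diff)
next
  case (gen_left a g) then show ?case
    by (simp add: Phi_sur_comp gen_ideal.gen_left)
next
  case (gen_right a g) then show ?case
    by (simp add: Phi_sur_comp gen_ideal.gen_right)
qed

lemma maze_weight_corr_to_maze: "trunc_eq n (maze_weight n (corr_to_maze c)) (frag_of (mset c))"
proof (cases "1 \<le> n")
  case True
  have "maze_corr (corr_to_maze c) = c" by (induction c) (auto simp: maze_corr_def corr_to_maze_def)
  moreover have "\<forall>p\<in>set (corr_to_maze c). plab p = 1" by (auto simp: corr_to_maze_def plab_def)
  ultimately have "maze_weight n (corr_to_maze c) = frag_of (mset c)" using maze_weight_pure[OF _ True, of "corr_to_maze c"] by simp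
  then show ?thesis by simp
next
  case False
  then have n: "n = 0" by simp
  show ?thesis
  proof (cases c)
    case Nil then show ?thesis by (simp add: maze_weight_prod_mset corr_to_maze_def)
  next
    case (Cons x c')
    have "maze_weight n (corr_to_maze c) = 0"
      by (simp add: maze_weight_prod_mset Cons corr_to_maze_def passage_weight_def trunc_pow_def n case_prod_beta)
    moreover have "frag_of (mset c) \<in> deg_gt n" by (simp add: deg_gt_def deg_ge_def Cons n)
    ultimately show ?thesis by (simp add: trunc_eq_def deg_gt_def deg_ge_uminus)
  qed
qed

lemma laby_weight_Phi: "trunc_eq n (laby_weight n (Phi a)) (corr_class a)"
proof -
  have "laby_weight n (Phi a) = frag_extend (\<lambda>c. maze_weight n (corr_to_maze c)) a"
    unfolding laby_weight_def Phi_def by (simp add: frag_extend_compose[unfolded o_def])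
  then show ?thesis unfolding corr_class_def by (simp add: frag_extend_trunc_eq maze_weight_corr_to_maze)
qed

lemma frag_of_minus_list_of_mset_sur_ideal: "frag_of c - frag_of (list_of (mset c)) \<in> sur_ideal n"
proof -
  have "mset c = mset (list_of (mset c))" by simp
  then obtain f where f: "bij_betw f {..<length c} {..<length (list_of (mset c))}"
      "\<forall>i<length c. c!i = list_of (mset c) ! (f i)"
    using permutation_Ex_bij by blast
  have "corr_iso c (list_of (mset c))"
    unfolding corr_iso_def using f by (auto dest: bij_betw_same_card)
  then show ?thesis unfolding sur_ideal_def sur_rel_def by (intro gen_base) blast
qed

lemma sur_ideal_if_corr_class_deg_gt: "corr_class a \<in> deg_gt n \<Longrightarrow> a \<in> sur_ideal n"
proof -
  assume Z: "corr_class a \<in> deg_gt n"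
  have "a - frag_extend (\<lambda>c. frag_of (list_of (mset c))) a \<in> sur_ideal n"
  proof -
    have "a - frag_extend (\<lambda>c. frag_of (list_of (mset c))) a = frag_extend (\<lambda>c. frag_of c - frag_of (list_of (mset c))) a"
      using frag_extend_diff_fun[of frag_of "\<lambda>c. frag_of (list_of (mset c))" a] frag_expansion[of a] by simp
    then show ?thesis
      unfolding sur_ideal_def
      by (simp add: gen_ideal_frag_extend frag_of_minus_list_of_mset_sur_ideal[unfolded sur_ideal_def])
  qed
  moreover have "frag_extend (\<lambda>c. frag_of (list_of (mset c))) a \<in> sur_ideal n"
  proof -
    have "frag_extend (\<lambda>c. frag_of (list_of (mset c))) a = frag_extend (\<lambda>M. frag_of (list_of M)) (corr_class a)"
      unfolding corr_class_def by (simp add: frag_extend_compose[unfolded o_def])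
    also have "\<dots> \<in> sur_ideal n"
      unfolding sur_ideal_def
    proof (rule gen_ideal_frag_extend)
      fix M assume "M \<in> Poly_Mapping.keys (corr_class a)"
      then have "n < size M" using Z by (auto simp: deg_gt_def deg_ge_def)
      then have "n < length (list_of M)" by (metis mset_list_of size_mset)
      then show "frag_of (list_of M) \<in> gen_ideal sur_comp (sur_rel n)"
        by (intro gen_base) (auto simp: sur_rel_def)
    qed
    finally show ?thesis .
  qed
  ultimately show ?thesis unfolding sur_ideal_def using gen_ideal_add by fastforce
qed

section \<open>Fullness and the main theorem\<close>

lemma corr_to_maze_maze_corr: "\<forall>p\<in>set R. plab p = 1 \<Longrightarrow> corr_to_maze (maze_corr R) = R"
  by (induction R) (auto simp: maze_corr_def corr_to_maze_def plab_def)

lemma set_maze_corr_maze_I: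
  assumes d: "d \<in> mult_vectors n P"
  shows "set (maze_corr (maze_I P d)) = passage_edge ` set P"
proof -
  have l: "length d = length P" and pos: "\<forall>i<length P. 1 \<le> d!i"
    using d by (auto simp: mult_vectors_def) (metis atLeastAtMost_iff nth_mem subsetD)
  have "set (maze_corr (maze_I P d)) = set_mset (mset (maze_corr (maze_I P d)))" by simp
  also have "\<dots> = (\<Union>i<length P. set_mset (replicate_mset (d!i) (passage_edge (P!i))))"
    by (simp add: mset_maze_corr_maze_I[OF l] set_mset_sum)
  also have "\<dots> = (\<Union>i<length P. {passage_edge (P!i)})"
    using pos by (intro SUP_cong refl) (auto simp: set_mset_replicate_mset_subset)
  also have "\<dots> = passage_edge ` set P" unfolding set_conv_nth by blast
  finally show ?thesis .
qed

lemma Phi_labyHom: "a \<in> surHom X Y \<Longrightarrow> Phi a \<in> labyHom X Y"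
proof (unfold labyHom_def, intro CollectI ballI)
  fix P assume a: "a \<in> surHom X Y" and "P \<in> Poly_Mapping.keys (Phi a)"
  then obtain c where c: "c \<in> Poly_Mapping.keys a" "P = corr_to_maze c"
    using keys_frag_extend[of "\<lambda>c. frag_of (corr_to_maze c)" a] by (auto simp: Phi_def keys_frag_of)
  have "fst ` set c = X" "snd ` set c = Y"
    using a c by (auto simp: surHom_def corr_src_def corr_tgt_def)
  moreover have "maze_src (corr_to_maze c) = fst ` set c" "maze_tgt (corr_to_maze c) = snd ` set c"
    by (simp_all add: maze_src_def maze_tgt_def corr_to_maze_def psrc_def ptgt_def image_image case_prod_beta)
  ultimately show "maze_src P = X \<and> maze_tgt P = Y" using c by simp
qed

lemma Phi_in_laby_ideal_iff: "Phi a \<in> laby_ideal n \<longleftrightarrow> a \<in> sur_ideal n"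
proof
  assume "Phi a \<in> laby_ideal n"
  then have "laby_weight n (Phi a) \<in> deg_gt n" by (rule laby_weight_ideal)
  then have "corr_class a \<in> deg_gt n"
    using laby_weight_Phi[of n a] trunc_eq_sym trunc_eq_deg_gt_trans by blast
  then show "a \<in> sur_ideal n" by (rule sur_ideal_if_corr_class_deg_gt)
qed (rule Phi_sur_ideal)

text \<open>By the expansion relation of laby_rel, P is congruent to the image of this combination.\<close>
definition maze_preimage :: "nat \<Rightarrow> 'a maze \<Rightarrow> ('a corr \<Rightarrow>\<^sub>0 int)" where
  "maze_preimage n P = (\<Sum>d\<in>mult_vectors n P. frag_cmul (mult_coeff P d) (frag_of (maze_corr (maze_I P d))))"

lemma maze_preimage_surHom:
  assumes "maze_src P = X" "maze_tgt P = Y"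
  shows "maze_preimage n P \<in> surHom X Y"
  unfolding surHom_def
proof (intro CollectI ballI)
  fix c assume "c \<in> Poly_Mapping.keys (maze_preimage n P)"
  then obtain d where d: "d \<in> mult_vectors n P" "c = maze_corr (maze_I P d)"
    using keys_sum[of "\<lambda>d. frag_cmul (mult_coeff P d) (frag_of (maze_corr (maze_I P d)))" "mult_vectors n P"]
    by (auto simp: maze_preimage_def keys_frag_of)
  then show "corr_src c = X \<and> corr_tgt c = Y"
    using assms set_maze_corr_maze_I[OF d(1)]
    by (auto simp: corr_src_def corr_tgt_def maze_src_def maze_tgt_def passage_edge_def image_image)
qed

lemma Phi_maze_preimage:
  "Phi (maze_preimage n P) = (\<Sum>d\<in>mult_vectors n P. frag_cmul (mult_coeff P d) (frag_of (maze_I P d)))"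
  unfolding maze_preimage_def Phi_def
  by (simp add: frag_extend_sum finite_mult_vectors frag_extend_cmul o_def corr_to_maze_maze_corr plab_maze_I)

lemma Phi_full_mod_laby_ideal:
  assumes b: "b \<in> labyHom X Y"
  shows "\<exists>a\<in>surHom X Y. b - Phi a \<in> laby_ideal n"
proof
  let ?a = "frag_extend (maze_preimage n) b"
  show "?a \<in> surHom X Y"
    unfolding surHom_def
  proof (intro CollectI ballI)
    fix c assume "c \<in> Poly_Mapping.keys ?a"
    then obtain P where "P \<in> Poly_Mapping.keys b" "c \<in> Poly_Mapping.keys (maze_preimage n P)"
      using keys_frag_extend[of "maze_preimage n" b] by blast
    then show "corr_src c = X \<and> corr_tgt c = Y"
      using b maze_preimage_surHom[of P X Y n] by (auto simp: labyHom_def surHom_def)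
  qed
  have "Phi ?a = frag_extend (\<lambda>P. Phi (maze_preimage n P)) b"
    unfolding Phi_def by (rule frag_extend_frag_extend)
  then have "b - Phi ?a = frag_extend (\<lambda>P. frag_of P - Phi (maze_preimage n P)) b"
    using frag_expansion[of b] frag_extend_diff_fun[of frag_of _ b] by simp
  also have "\<dots> \<in> laby_ideal n"
    unfolding laby_ideal_def Phi_maze_preimage
    by (intro gen_ideal_frag_extend gen_base) (auto simp: laby_rel_def mult_coeff_def)
  finally show "b - Phi ?a \<in> laby_ideal n" .
qed

lemma Phi_sur_id: "Phi (sur_id X) = laby_id X"
  by (simp add: sur_id_def laby_id_def corr_to_maze_def o_def)

theorem mainTheorem16:
  fixes n :: nat
  shows
    "(\<forall>(X::'a set) Y. \<forall>a\<in>surHom X Y.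
        Phi a \<in> labyHom X Y \<and> (a \<in> sur_ideal n \<longleftrightarrow> Phi a \<in> laby_ideal n))
   \<and> (\<forall>(X::'a set) Y. \<forall>b\<in>labyHom X Y. \<exists>a\<in>surHom X Y. b - Phi a \<in> laby_ideal n)
   \<and> (\<forall>(X::'a set) Y Z a b. a \<in> surHom Y Z \<longrightarrow> b \<in> surHom X Y \<longrightarrow>
        Phi (sur_comp a b) - laby_comp (Phi a) (Phi b) \<in> laby_ideal n)
   \<and> (\<forall>X::'a set. finite X \<longrightarrow> Phi (sur_id X) - laby_id X \<in> laby_ideal n)"
proof -
  have "(0 :: 'a maze \<Rightarrow>\<^sub>0 int) \<in> laby_ideal n" unfolding laby_ideal_def by (rule gen_zero)
  then show ?thesis
    by (simp add: Phi_labyHom Phi_in_laby_ideal_iff Phi_full_mod_laby_ideal Phi_sur_comp Phi_sur_id)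
qed

end
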